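(* In the setting below (with $\rho\in(r,R)$ fixed) and with $\gamma=(1+\sqrt2)^2$, there is $C>0$ such that for all $N\in\mathbb{N}_0$, \[ \|V_NH_N^\dagger G_NV_N^{-1}-L\|_{\ell^2}\le C\left(\left(\frac{\gamma\rho}{R}\right)^N+\left(\frac{r}{\rho}\right)^N\right). \] In particular, if $\gamma r<R$ and $\rho=\sqrt{rR/\gamma}$, then $\|V_NH_N^\dagger G_NV_N^{-1}-L\|_{\ell^2}\le C'(\gamma r/R)^{N/2}$ for some $C'>0$ and all $N\in\mathbb{N}_0$.
   Context: $T\colon[-1,1]\to[-1,1]$ is an analytic full branch map: closed intervals $I_1,\dots,I_d$ with disjoint interiors covering $[-1,1]$, $T|_{\mathrm{int}(I_\ell)}$ an analytic diffeomorphism with $\overline{T(I_\ell)}=[-1,1]$; inverse branches $\varphi_\ell$ extend to bounded holomorphic functions on $D_R=\{|z|<R\}$ with $\bigcup_\ell\varphi_\ell(D_R)\subseteq D_r$, $1<r<R$. Transfer operator: $(\mathcal{L}f)(z)=\sum_\ell\sigma_\ell\varphi_\ell'(z)f(\varphi_\ell(z))$, $\sigma_\ell=\mathrm{sgn}(\varphi_\ell'(0))$. Fix $\rho\in(r,R)$; $H^2(D_\rho)$ is the Hardy space on $D_\rho$ with orthonormal basis $e_n(z)=(z/\rho)^n$ and inner product $(\cdot,\cdot)$. Operators on $\ell^2(\mathbb{N}_0)$: $L_{k\ell}=(\mathcal{L}e_\ell,e_k)$ (so $L$ is the matrix of $\mathcal{L}$ on $H^2(D_\rho)$); $H_{k\ell}=\frac12\int_{-1}^1x^{k+\ell}dx$;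 $G_{k\ell}=\frac12\int_{-1}^1(T(x))^kx^\ell dx$; $V$, $V^{-1}$ diagonal with entries $\rho^n$, $\rho^{-n}$. $P_N$ is the orthogonal projection onto the first $N$ coordinates; $H_N=P_NHP_N$, $G_N=P_NGP_N$, $V_N=P_NVP_N$, $V_N^{-1}=P_NV^{-1}P_N$; $H_N^\dagger$ is the operator equal to the inverse of the (positive definite) $N\times N$ section of $H_N$ on the range of $P_N$ and $0$ on its orthogonal complement. *)

theory Defs
  imports "HOL-Complex_Analysis.Complex_Analysis"
begin

text \<open>Setting: analytic full branch map T on [-1,1] with branch intervals
  I_l = {a l..b l} (l < d) and inverse branches phi l.\<close>

definition real_analytic_on :: "(real \<Rightarrow> real) \<Rightarrow> real set \<Rightarrow> bool" where
  "real_analytic_on f S \<longleftrightarrow> (\<forall>x\<in>S. \<exists>e>0. \<exists>g. g holomorphic_on ball (complex_of_real x) e \<and>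
      (\<forall>y. \<bar>y - x\<bar> < e \<longrightarrow> g (complex_of_real y) = complex_of_real (f y)))"

definition full_branch_setting ::
  "(real \<Rightarrow> real) \<Rightarrow> nat \<Rightarrow> (nat \<Rightarrow> real) \<Rightarrow> (nat \<Rightarrow> real) \<Rightarrow>
   (nat \<Rightarrow> complex \<Rightarrow> complex) \<Rightarrow> real \<Rightarrow> real \<Rightarrow> bool" where
  "full_branch_setting T d a b \<phi> r R \<longleftrightarrow>
     1 < r \<and> r < R \<and> d \<ge> 1 \<and>
     T ` {-1..1} \<subseteq> {-1..1} \<and>
     (\<Union>l<d. {a l..b l}) = {-1..1} \<and>
     (\<forall>l<d. a l < b l) \<and>
     (\<forall>l<d. \<forall>m<d. l \<noteq> m \<longrightarrow> {a l<..<b l} \<inter> {a m<..<b m} = {}) \<and>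
     (\<forall>l<d. closure (T ` {a l..b l}) = {-1..1}) \<and>
     (\<forall>l<d. inj_on T {a l<..<b l} \<and> real_analytic_on T {a l<..<b l} \<and>
        (\<forall>x\<in>{a l<..<b l}. \<exists>D. (T has_real_derivative D) (at x) \<and> D \<noteq> 0)) \<and>
     (\<forall>l<d. \<phi> l holomorphic_on ball 0 R \<and> bounded (\<phi> l ` ball 0 R) \<and>
        \<phi> l ` ball 0 R \<subseteq> ball 0 r \<and>
        (\<forall>x\<in>{a l<..<b l}. \<phi> l (complex_of_real (T x)) = complex_of_real x))"

text \<open>sigma_l = sgn(phi_l'(0)) (phi_l'(0) is real and nonzero).\<close>
definition branch_sign :: "(complex \<Rightarrow> complex) \<Rightarrow> complex" where
  "branch_sign f = sgn (deriv f 0)"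

definition transfer_op ::
  "nat \<Rightarrow> (nat \<Rightarrow> complex \<Rightarrow> complex) \<Rightarrow> (complex \<Rightarrow> complex) \<Rightarrow> complex \<Rightarrow> complex" where
  "transfer_op d \<phi> f z = (\<Sum>l<d. branch_sign (\<phi> l) * deriv (\<phi> l) z * f (\<phi> l z))"

definition taylor_coeff :: "(complex \<Rightarrow> complex) \<Rightarrow> nat \<Rightarrow> complex" where
  "taylor_coeff f n = (deriv ^^ n) f 0 / of_nat (fact n)"

definition hardy_inner :: "real \<Rightarrow> (complex \<Rightarrow> complex) \<Rightarrow> (complex \<Rightarrow> complex) \<Rightarrow> complex" where
  "hardy_inner \<rho> f g = (\<Sum>n. taylor_coeff f n * cnj (taylor_coeff g n) * of_real (\<rho> ^ (2 * n)))"

definition hardy_basis :: "real \<Rightarrow> nat \<Rightarrow> complex \<Rightarrow> complex" where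
  "hardy_basis \<rho> n z = (z / of_real \<rho>) ^ n"

definition Lmat :: "nat \<Rightarrow> (nat \<Rightarrow> complex \<Rightarrow> complex) \<Rightarrow> real \<Rightarrow> nat \<Rightarrow> nat \<Rightarrow> complex" where
  "Lmat d \<phi> \<rho> k l = hardy_inner \<rho> (transfer_op d \<phi> (hardy_basis \<rho> l)) (hardy_basis \<rho> k)"

definition Hmat :: "nat \<Rightarrow> nat \<Rightarrow> real" where
  "Hmat k l = integral {-1..1} (\<lambda>x::real. x ^ (k + l)) / 2"

definition Gmat :: "(real \<Rightarrow> real) \<Rightarrow> nat \<Rightarrow> nat \<Rightarrow> real" where
  "Gmat T k l = integral {-1..1} (\<lambda>x::real. (T x) ^ k * x ^ l) / 2"

definition Hdag :: "nat \<Rightarrow> nat \<Rightarrow> nat \<Rightarrow> real" where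
  "Hdag N = (THE B. (\<forall>i j. \<not> (i < N \<and> j < N) \<longrightarrow> B i j = 0) \<and>
        (\<forall>i<N. \<forall>k<N. (\<Sum>j<N. Hmat i j * B j k) = (if i = k then 1 else 0)))"

definition approx_mat :: "(real \<Rightarrow> real) \<Rightarrow> real \<Rightarrow> nat \<Rightarrow> nat \<Rightarrow> nat \<Rightarrow> complex" where
  "approx_mat T \<rho> N k l =
     (if k < N \<and> l < N then
        of_real (\<rho> ^ k * (\<Sum>j<N. Hdag N k j * Gmat T j l) * \<rho> powi (- int l))
      else 0)"

text \<open>l^2 operator norm of an infinite matrix (value \<infinity> if unbounded), computed over
  finitely supported unit vectors and finite output truncations.\<close>
definition l2_opnorm :: "(nat \<Rightarrow> nat \<Rightarrow> complex) \<Rightarrow> ennreal" where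
  "l2_opnorm M = (SUP (n, m, x) \<in> {(n, m, x). (\<Sum>j<n. (cmod (x j))\<^sup>2) \<le> 1}.
      ennreal (sqrt (\<Sum>k<m. (cmod (\<Sum>j<n. M k j * x j))\<^sup>2)))"

end

theory Submission
  imports Defs "HOL-Computational_Algebra.Polynomial"
begin

(* Let c_jl be the Taylor coefficients at 0 of L(z^l), so that L = V C V^-1 with C = (c_jl).
   Changing variables along each inverse branch turns G into H C, the product converging in the
   middle index. Since (H_N^+ H)_km is the Kronecker delta for m < N, the first N rows of
   H_N^+ G_N - C only involve the rows m >= N of C, which are O(s^-m) for every s < R by
   Cauchy's estimate. Writing H_N^+ through the Legendre polynomials, whose coefficients grow at
   most like beta^n with beta = sqrt (64/3) < gamma, the block k, l < N of the error costs
   O(N^3 (rho beta / s)^N) after conjugation by V, while the entries outside the block are at most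
   (rho/s)^k (r/rho)^l up to a constant. The sum of all entries bounds the l^2 norm, and s close
   to R turns the two rates into (gamma rho / R)^N and (r / rho)^N. *)

subsection \<open>Polynomials in \<open>L\<^sup>2([-1, 1], dx/2)\<close>\<close>

definition poly_inner :: "real poly \<Rightarrow> real poly \<Rightarrow> real" where
  "poly_inner p q = integral {-1..1} (\<lambda>x. poly p x * poly q x) / 2"

lemma integrable_poly_product: "(\<lambda>x. poly p x * poly q x) integrable_on {-1..1::real}"
  by (intro integrable_continuous_interval continuous_intros)

lemma poly_inner_commute: "poly_inner p q = poly_inner q p"
  unfolding poly_inner_def by (simp add: mult.commute)

lemma poly_inner_add_left: "poly_inner (p + q) s = poly_inner p s + poly_inner q s"
  unfolding poly_inner_def
  by (simp add: distrib_right integral_add[OF integrable_poly_product integrable_poly_product]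
      add_divide_distrib)

lemma poly_inner_smult_left: "poly_inner (smult c p) q = c * poly_inner p q"
  unfolding poly_inner_def by (simp add: mult.assoc)

lemma poly_inner_0_left [simp]: "poly_inner 0 q = 0"
  unfolding poly_inner_def by simp

lemma poly_inner_sum_left:
  "finite A \<Longrightarrow> poly_inner (\<Sum>n\<in>A. f n) q = (\<Sum>n\<in>A. poly_inner (f n) q)"
  by (induction A rule: finite_induct) (simp_all add: poly_inner_add_left)

lemma integral_poly_pderiv:
  "integral {-1..1} (\<lambda>x. poly (pderiv p) x) = poly p 1 - poly p (-1 :: real)"
proof -
  have "((\<lambda>x. poly (pderiv p) x) has_integral (poly p 1 - poly p (-1))) {-1..1}"
    by (rule fundamental_theorem_of_calculus)
       (auto intro!: DERIV_subset[OF poly_DERIV]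
         simp: has_real_derivative_iff_has_vector_derivative[symmetric])
  then show ?thesis by (rule integral_unique)
qed

lemma poly_inner_pderiv_left:
  "poly_inner (pderiv p) q = (poly (p * q) 1 - poly (p * q) (-1)) / 2 - poly_inner p (pderiv q)"
proof -
  have "poly_inner (pderiv p) q + poly_inner p (pderiv q) =
      integral {-1..1} (\<lambda>x. poly (pderiv (p * q)) x) / 2"
    unfolding poly_inner_def pderiv_mult
    by (simp add: integral_add[OF integrable_poly_product integrable_poly_product, symmetric]
        add_divide_distrib[symmetric] algebra_simps)
  then show ?thesis by (simp add: integral_poly_pderiv field_simps)
qed

lemma abs_poly_inner_le_sqrt:
  assumes pos: "poly_inner q q > 0" and bounded: "\<And>x. x \<in> {-1..1} \<Longrightarrow> \<bar>poly p x\<bar> \<le> 1"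
  shows "\<bar>poly_inner q p\<bar> \<le> sqrt (poly_inner q q)"
proof -
  define t where "t = sqrt (poly_inner q q)"
  have t: "t > 0" and tt: "t * t = poly_inner q q"
    using pos unfolding t_def by simp_all
  have "integral {-1..1} (\<lambda>x. poly q x * poly q x) = 2 * t * t"
    using tt unfolding poly_inner_def by simp
  then have int_qq: "((\<lambda>x. poly q x * poly q x) has_integral 2 * t * t) {-1..1}"
    using integrable_integral[OF integrable_poly_product[of q q]] by simp
  \<comment> \<open>AM-GM with weight \<open>t\<close>: \<open>|q| \<le> (q\<^sup>2 / t + t) / 2\<close>.\<close>
  have "norm (integral {-1..1} (\<lambda>x. poly q x * poly p x)) \<le>
      integral {-1..1} (\<lambda>x. (poly q x * poly q x / t + t) / 2)"
  proof (rule integral_norm_bound_integral)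
    show "(\<lambda>x. (poly q x * poly q x / t + t) / 2) integrable_on {-1..1::real}"
      using t by (intro integrable_continuous_interval continuous_intros) auto
    fix x :: real assume x: "x \<in> {-1..1}"
    have "\<bar>poly q x * poly p x\<bar> \<le> \<bar>poly q x\<bar>"
      using bounded[OF x] by (simp add: abs_mult mult_left_le)
    also have "\<dots> \<le> (poly q x * poly q x / t + t) / 2"
    proof -
      have "2 * t * \<bar>poly q x\<bar> \<le> poly q x * poly q x + t * t"
        using sum_squares_ge_zero[of "\<bar>poly q x\<bar> - t" 0]
        by (simp add: power2_eq_square algebra_simps abs_mult_self_eq)
      then show ?thesis using t by (simp add: field_simps)
    qed
    finally show "norm (poly q x * poly p x) \<le> (poly q x * poly q x / t + t) / 2"
      by simp
  qed (rule integrable_poly_product)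
  also have "\<dots> = 2 * t"
    using has_integral_divide[OF has_integral_add[OF has_integral_divide[OF int_qq, of t]
          has_integral_const_real[of t "-1" 1]], of 2] t
    by (intro integral_unique) (simp add: field_simps)
  finally show ?thesis unfolding poly_inner_def t_def by simp
qed

subsection \<open>Legendre polynomials\<close>

definition rodrigues_base :: "nat \<Rightarrow> real poly" where
  "rodrigues_base n = [:-1, 0, 1:] ^ n"

text \<open>Rodrigues' formula without normalisation: \<open>legendre n\<close> is \<open>2\<^sup>n n!\<close> times the
  Legendre polynomial \<open>P\<^sub>n\<close>.\<close>
definition legendre :: "nat \<Rightarrow> real poly" where
  "legendre n = (pderiv ^^ n) (rodrigues_base n)"

definition legendre_lead :: "nat \<Rightarrow> real" where
  "legendre_lead n = pochhammer (of_nat (Suc n)) n"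

definition wallis_integral :: "nat \<Rightarrow> real" where
  "wallis_integral n = integral {-1..1} (\<lambda>x. (1 - x\<^sup>2) ^ n)"

abbreviation legendre_sqnorm :: "nat \<Rightarrow> real" where
  "legendre_sqnorm n \<equiv> poly_inner (legendre n) (legendre n)"

lemma pderiv_dvd_of_power_Suc_dvd:
  assumes "[:c, 1:] ^ Suc m dvd p"
  shows "[:c, 1:] ^ m dvd pderiv p"
proof -
  obtain q where p: "p = [:c, 1:] ^ Suc m * q" using assms by blast
  have "pderiv p = [:c, 1:] ^ m * (smult (of_nat (Suc m)) q + [:c, 1:] * pderiv q)"
    unfolding p pderiv_mult pderiv_power_Suc by (simp add: pderiv_pCons algebra_simps)
  then show ?thesis by simp
qed

lemma higher_pderiv_dvd:
  assumes "[:c, 1:] ^ n dvd p" "k \<le> n"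
  shows "[:c, 1:] ^ (n - k) dvd (pderiv ^^ k) p"
  using assms(2)
proof (induction k)
  case 0
  then show ?case using assms(1) by simp
next
  case (Suc k)
  then have "[:c, 1:] ^ Suc (n - Suc k) dvd (pderiv ^^ k) p"
    using Suc_diff_Suc[of k n] by simp
  then show ?case by (simp add: pderiv_dvd_of_power_Suc_dvd)
qed

lemma rodrigues_base_factor: "rodrigues_base n = [:-1, 1:] ^ n * [:1, 1:] ^ n"
  unfolding rodrigues_base_def by (simp add: power_mult_distrib[symmetric])

lemma poly_higher_pderiv_rodrigues_base_endpoints:
  assumes "k < n"
  shows "poly ((pderiv ^^ k) (rodrigues_base n)) 1 = 0"
    and "poly ((pderiv ^^ k) (rodrigues_base n)) (-1) = 0"
proof -
  have "[:-1, 1:] ^ (n - k) dvd (pderiv ^^ k) (rodrigues_base n)"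
    by (rule higher_pderiv_dvd) (use assms in \<open>auto simp: rodrigues_base_factor\<close>)
  then show "poly ((pderiv ^^ k) (rodrigues_base n)) 1 = 0"
    using assms by (auto elim!: dvdE)
  have "[:1, 1:] ^ (n - k) dvd (pderiv ^^ k) (rodrigues_base n)"
    by (rule higher_pderiv_dvd) (use assms in \<open>auto simp: rodrigues_base_factor\<close>)
  then show "poly ((pderiv ^^ k) (rodrigues_base n)) (-1) = 0"
    using assms by (auto elim!: dvdE)
qed

lemma poly_inner_legendre_parts:
  "poly_inner (legendre n) p = (-1) ^ n * poly_inner (rodrigues_base n) ((pderiv ^^ n) p)"
proof -
  have "poly_inner (legendre n) p =
      (-1) ^ k * poly_inner ((pderiv ^^ (n - k)) (rodrigues_base n)) ((pderiv ^^ k) p)"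
    if "k \<le> n" for k
    using that
  proof (induction k)
    case 0
    then show ?case by (simp add: legendre_def)
  next
    case (Suc k)
    have "(pderiv ^^ (n - k)) (rodrigues_base n) = pderiv ((pderiv ^^ (n - Suc k)) (rodrigues_base n))"
      using Suc.prems by (metis Suc_diff_Suc Suc_le_lessD funpow.simps(2) o_apply)
    then have "poly_inner ((pderiv ^^ (n - k)) (rodrigues_base n)) ((pderiv ^^ k) p) =
        - poly_inner ((pderiv ^^ (n - Suc k)) (rodrigues_base n)) ((pderiv ^^ Suc k) p)"
      using Suc.prems
      by (simp add: poly_inner_pderiv_left poly_higher_pderiv_rodrigues_base_endpoints)
    then show ?case using Suc by simp
  qed
  from this[of n] show ?thesis by simp
qed

lemma poly_inner_legendre_low_degree:
  assumes "\<forall>i\<ge>n. coeff p i = 0"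
  shows "poly_inner (legendre n) p = 0"
proof -
  have "(pderiv ^^ n) p = 0"
    using assms by (intro poly_eqI) (simp add: coeff_higher_pderiv)
  then show ?thesis using poly_inner_legendre_parts[of n p] by (simp add: poly_inner_def)
qed

lemma coeff_rodrigues_base_Suc:
  "coeff (rodrigues_base (Suc n)) j =
     - coeff (rodrigues_base n) j + (if 2 \<le> j then coeff (rodrigues_base n) (j - 2) else 0)"
proof -
  have "rodrigues_base (Suc n) = smult (-1) (rodrigues_base n) + pCons 0 (pCons 0 (rodrigues_base n))"
    unfolding rodrigues_base_def by (simp add: algebra_simps)
  then show ?thesis
    by (cases j; cases "j - 1") (auto simp: coeff_pCons' numeral_2_eq_2)
qed

lemma abs_coeff_rodrigues_base_le: "\<bar>coeff (rodrigues_base n) j\<bar> \<le> 2 ^ n"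
proof (induction n arbitrary: j)
  case 0
  then show ?case by (simp add: rodrigues_base_def coeff_1)
next
  case (Suc n)
  have "\<bar>coeff (rodrigues_base (Suc n)) j\<bar> \<le>
      \<bar>coeff (rodrigues_base n) j\<bar> + \<bar>if 2 \<le> j then coeff (rodrigues_base n) (j - 2) else 0\<bar>"
    unfolding coeff_rodrigues_base_Suc by linarith
  also have "\<dots> \<le> 2 ^ n + 2 ^ n"
    using Suc[of j] Suc[of "j - 2"] by (intro add_mono) auto
  finally show ?case by simp
qed

lemma degree_rodrigues_base: "degree (rodrigues_base n) = 2 * n"
  unfolding rodrigues_base_def by (subst degree_power_eq) auto

lemma coeff_rodrigues_base_top: "coeff (rodrigues_base n) (2 * n) = 1"
  using lead_coeff_power[of "[:-1, 0, 1 :: real:]" n]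
  by (simp add: degree_rodrigues_base flip: rodrigues_base_def)

lemma coeff_legendre:
  "coeff (legendre n) i = pochhammer (of_nat (Suc i)) n * coeff (rodrigues_base n) (i + n)"
  unfolding legendre_def by (rule coeff_higher_pderiv)

lemma coeff_legendre_top: "coeff (legendre n) n = legendre_lead n"
  unfolding coeff_legendre legendre_lead_def using coeff_rodrigues_base_top[of n]
  by (simp add: mult_2)

lemma coeff_legendre_above: "n < i \<Longrightarrow> coeff (legendre n) i = 0"
  unfolding coeff_legendre by (simp add: coeff_eq_0 degree_rodrigues_base)

lemma legendre_lead_pos: "legendre_lead n > 0"
  unfolding legendre_lead_def by (intro pochhammer_pos) simp

lemma abs_coeff_legendre_le: "\<bar>coeff (legendre n) i\<bar> \<le> legendre_lead n * 2 ^ n"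
proof (cases "i \<le> n")
  case True
  have "pochhammer (of_nat (Suc i)) n \<le> legendre_lead n"
    unfolding legendre_lead_def pochhammer_prod using True by (intro prod_mono) auto
  then have "pochhammer (of_nat (Suc i)) n * \<bar>coeff (rodrigues_base n) (i + n)\<bar> \<le>
      legendre_lead n * 2 ^ n"
    by (intro mult_mono abs_coeff_rodrigues_base_le)
      (use legendre_lead_pos[of n] in \<open>auto simp: pochhammer_nonneg\<close>)
  then show ?thesis
    unfolding coeff_legendre abs_mult by (simp add: pochhammer_nonneg)
next
  case False
  then show ?thesis using legendre_lead_pos[of n] by (simp add: coeff_legendre_above less_imp_le)
qed

lemma poly_inner_legendre_orthogonal:
  assumes "m \<noteq> n"
  shows "poly_inner (legendre m) (legendre n) = 0"
proof (cases "m < n")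
  case True
  then have "poly_inner (legendre n) (legendre m) = 0"
    by (intro poly_inner_legendre_low_degree) (auto simp: coeff_legendre_above)
  then show ?thesis by (simp add: poly_inner_commute)
next
  case False
  with assms show ?thesis
    by (intro poly_inner_legendre_low_degree) (auto simp: coeff_legendre_above)
qed

lemma higher_pderiv_monom: "(pderiv ^^ n) (monom c n) = [:c * fact n :: real:]"
  by (intro poly_eqI) (auto simp: coeff_higher_pderiv coeff_pCons' pochhammer_fact)

lemma poly_inner_rodrigues_base_const:
  "poly_inner (rodrigues_base n) [:c:] = (-1) ^ n * c * wallis_integral n / 2"
proof -
  have "(x\<^sup>2 - 1) ^ n = (-1) ^ n * (1 - x\<^sup>2) ^ n" for x :: real
    by (simp add: power_mult_distrib[symmetric])
  then show ?thesis
    unfolding poly_inner_def wallis_integral_def rodrigues_base_def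
    by (simp add: poly_power power2_eq_square mult_ac)
qed

lemma legendre_sqnorm_eq: "legendre_sqnorm n = legendre_lead n * fact n * wallis_integral n / 2"
proof -
  have "poly_inner (legendre n) (legendre n - monom (legendre_lead n) n) = 0"
    by (rule poly_inner_legendre_low_degree)
      (auto simp: coeff_legendre_top coeff_legendre_above)
  then have "legendre_sqnorm n = poly_inner (legendre n) (monom (legendre_lead n) n)"
    using poly_inner_add_left[of "monom (legendre_lead n) n" "legendre n - monom (legendre_lead n) n"]
    by (simp add: poly_inner_commute)
  also have "\<dots> = (-1) ^ n * poly_inner (rodrigues_base n) [:legendre_lead n * fact n:]"
    by (simp add: poly_inner_legendre_parts higher_pderiv_monom)
  finally show ?thesis by (simp add: poly_inner_rodrigues_base_const)
qed

lemma wallis_integral_ge: "wallis_integral n \<ge> (3/4) ^ n"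
proof -
  have cont: "continuous_on S (\<lambda>x::real. (1 - x\<^sup>2) ^ n)" for S
    by (intro continuous_intros)
  have "(3/4) ^ n = integral {-1/2..1/2::real} (\<lambda>x. (3/4) ^ n)" by simp
  also have "\<dots> \<le> integral {-1/2..1/2} (\<lambda>x::real. (1 - x\<^sup>2) ^ n)"
  proof (intro integral_le integrable_continuous_interval cont ballI power_mono)
    fix x :: real assume "x \<in> {-1/2..1/2}"
    then have "x\<^sup>2 \<le> (1/2)\<^sup>2" by (intro power2_le_iff_abs_le[THEN iffD2]) auto
    then show "3/4 \<le> 1 - x\<^sup>2" by (simp add: power2_eq_square)
  qed auto
  also have "\<dots> \<le> wallis_integral n"
    unfolding wallis_integral_def
  proof (intro integral_subset_le integrable_continuous_interval cont ballI)
    fix x :: real assume "x \<in> {-1..1}"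
    then have "x\<^sup>2 \<le> 1" by (simp add: abs_square_le_1 abs_le_iff)
    then show "0 \<le> (1 - x\<^sup>2) ^ n" by simp
  qed auto
  finally show ?thesis .
qed

lemma wallis_integral_pos: "wallis_integral n > 0"
  using wallis_integral_ge[of n] by (smt (verit) zero_less_power zero_less_divide_iff)

lemma legendre_sqnorm_pos: "legendre_sqnorm n > 0"
  unfolding legendre_sqnorm_eq using legendre_lead_pos wallis_integral_pos by simp

lemma legendre_lead_le: "legendre_lead n \<le> fact n * 4 ^ n"
proof -
  have "fact (n + n) = fact n * legendre_lead n"
    unfolding legendre_lead_def pochhammer_fact pochhammer_product' by (simp add: add.commute)
  then have fact_double: "fact (2 * n) = fact n * legendre_lead n"
    by (simp add: mult_2)
  have "(2 * n choose n) \<le> (4::nat) ^ n"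
    using binomial_le_pow2[of "2 * n" n] by (simp add: power_mult)
  then have "real (2 * n choose n) \<le> 4 ^ n"
    by (metis of_nat_le_iff of_nat_numeral of_nat_power)
  moreover have "real (2 * n choose n) = fact (2 * n) / (fact n * fact n)"
    using binomial_fact[of n "2 * n"] by simp
  ultimately have "fact (2 * n) / (fact n * fact n) \<le> (4::real) ^ n"
    by linarith
  then show ?thesis
    unfolding fact_double by (simp add: divide_le_eq mult_ac)
qed

text \<open>Any constant below \<open>(1 + sqrt 2)\<^sup>2\<close> would do for the final estimate; \<open>sqrt (64/3)\<close>
  comes from \<open>legendre_lead_le\<close>, \<open>abs_coeff_rodrigues_base_le\<close> and \<open>wallis_integral_ge\<close>.\<close>
definition legendre_growth :: real where
  "legendre_growth = sqrt (64/3)"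

lemma legendre_growth_gt_1: "legendre_growth > 1"
  unfolding legendre_growth_def by (simp add: real_less_rsqrt)

lemma legendre_growth_less: "legendre_growth < (1 + sqrt 2)\<^sup>2"
proof -
  have "legendre_growth < 5"
    unfolding legendre_growth_def by (simp add: real_sqrt_less_iff real_less_lsqrt)
  moreover have "sqrt 2 > (1::real)" by simp
  then have "(1 + sqrt 2)\<^sup>2 > (5::real)" by (simp add: power2_eq_square algebra_simps)
  ultimately show ?thesis by linarith
qed

lemma legendre_lead_mult_four_pow_le:
  "legendre_lead n * 4 ^ n \<le> fact n * wallis_integral n * (64/3) ^ n"
proof -
  have "legendre_lead n * 4 ^ n \<le> fact n * 4 ^ n * 4 ^ n"
    using legendre_lead_le[of n] by (intro mult_right_mono) auto
  also have "\<dots> = fact n * ((3/4) ^ n * (64/3) ^ n)"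
    by (simp add: power_mult_distrib[symmetric] mult.assoc)
  also have "\<dots> \<le> fact n * (wallis_integral n * (64/3) ^ n)"
    using wallis_integral_ge[of n] by (intro mult_left_mono mult_right_mono) auto
  finally show ?thesis
    by (simp add: mult.assoc)
qed

lemma weighted_coeff_legendre_le:
  assumes "\<rho> \<ge> 1"
  shows "(\<Sum>i\<le>n. \<rho> ^ i * \<bar>coeff (legendre n) i\<bar>) \<le>
      sqrt (legendre_sqnorm n) * (sqrt 2 * (n + 1) * (\<rho> * legendre_growth) ^ n)"
proof -
  define X where "X = (n + 1) * (\<rho> ^ n * (legendre_lead n * 2 ^ n))"
  have "(\<Sum>i\<le>n. \<rho> ^ i * \<bar>coeff (legendre n) i\<bar>) \<le> (\<Sum>i\<le>n. \<rho> ^ n * (legendre_lead n * 2 ^ n))"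
    using assms by (intro sum_mono mult_mono power_increasing abs_coeff_legendre_le) auto
  then have sum_le: "(\<Sum>i\<le>n. \<rho> ^ i * \<bar>coeff (legendre n) i\<bar>) \<le> X"
    unfolding X_def by simp
  note lead = legendre_lead_mult_four_pow_le[of n]
  have four: "(4::real) ^ n = 2 ^ n * 2 ^ n" and rho2: "\<rho> ^ (2 * n) = \<rho> ^ n * \<rho> ^ n"
    by (simp_all add: power_mult_distrib[symmetric] mult_2 power_add)
  have "X\<^sup>2 = ((n + 1)\<^sup>2 * \<rho> ^ (2 * n) * legendre_lead n) * (legendre_lead n * 4 ^ n)"
    unfolding X_def four rho2 by (simp add: power2_eq_square algebra_simps)
  also have "\<dots> \<le> ((n + 1)\<^sup>2 * \<rho> ^ (2 * n) * legendre_lead n) * (fact n * wallis_integral n * (64/3) ^ n)"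
    using legendre_lead_pos[of n] assms by (intro mult_left_mono lead) auto
  also have "\<dots> = legendre_sqnorm n * (sqrt 2 * (n + 1) * (\<rho> * legendre_growth) ^ n)\<^sup>2"
  proof -
    have growth_sq: "legendre_growth\<^sup>2 = 64/3" unfolding legendre_growth_def by simp
    have "(sqrt 2 * (n + 1) * (\<rho> * legendre_growth) ^ n)\<^sup>2 =
        (sqrt 2)\<^sup>2 * (n + 1)\<^sup>2 * ((\<rho> * legendre_growth)\<^sup>2) ^ n"
      by (simp add: power_mult_distrib power_mult[symmetric] mult.commute)
    also have "\<dots> = 2 * (n + 1)\<^sup>2 * (\<rho> ^ (2 * n) * (64/3) ^ n)"
      by (simp add: power_mult_distrib growth_sq power_mult del: times_divide_eq_right)
    finally have "(sqrt 2 * (n + 1) * (\<rho> * legendre_growth) ^ n)\<^sup>2 =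
        2 * (n + 1)\<^sup>2 * (\<rho> ^ (2 * n) * (64/3) ^ n)" .
    then show ?thesis unfolding legendre_sqnorm_eq by (simp add: algebra_simps)
  qed
  finally have "X \<le> sqrt (legendre_sqnorm n * (sqrt 2 * (n + 1) * (\<rho> * legendre_growth) ^ n)\<^sup>2)"
    by (rule real_le_rsqrt)
  also have "\<dots> = sqrt (legendre_sqnorm n) * (sqrt 2 * (n + 1) * (\<rho> * legendre_growth) ^ n)"
    using assms legendre_growth_gt_1 by (simp add: real_sqrt_mult)
  finally have "X \<le> sqrt (legendre_sqnorm n) * (sqrt 2 * (n + 1) * (\<rho> * legendre_growth) ^ n)" .
  with sum_le show ?thesis by linarith
qed

subsection \<open>Inverting the sections of \<open>H\<close>\<close>

lemma Hmat_eq_poly_inner: "Hmat i j = poly_inner (monom 1 i) (monom 1 j)"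
  unfolding Hmat_def poly_inner_def by (simp add: poly_monom power_add)

lemma Hmat_commute: "Hmat i j = Hmat j i"
  unfolding Hmat_def by (simp add: add.commute)

lemma poly_eq_sum_monom:
  fixes p :: "real poly"
  assumes "\<forall>i\<ge>N. coeff p i = 0"
  shows "p = (\<Sum>j<N. smult (coeff p j) (monom 1 j))"
proof (rule poly_eqI)
  fix k
  have "coeff (\<Sum>j<N. smult (coeff p j) (monom 1 j)) k = (\<Sum>j<N. if j = k then coeff p j else 0)"
    by (simp add: coeff_sum coeff_monom if_distrib cong: if_cong)
  also have "\<dots> = coeff p k" using assms by (auto simp: not_less)
  finally show "coeff p k = coeff (\<Sum>j<N. smult (coeff p j) (monom 1 j)) k" by simp
qed

lemma sum_coeff_Hmat:
  assumes "\<forall>j\<ge>N. coeff q j = 0"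
  shows "(\<Sum>j<N. coeff q j * Hmat j m) = poly_inner q (monom 1 m)"
  by (subst (2) poly_eq_sum_monom[OF assms])
    (simp add: poly_inner_sum_left poly_inner_smult_left Hmat_eq_poly_inner)

lemma coeff_legendre_ge: "n < N \<Longrightarrow> \<forall>j\<ge>N. coeff (legendre n) j = 0"
  by (auto simp: coeff_legendre_above)

lemma legendre_expansion:
  "\<forall>i\<ge>N. coeff p i = 0 \<Longrightarrow>
     p = (\<Sum>n<N. smult (poly_inner p (legendre n) / legendre_sqnorm n) (legendre n))"
proof (induction N arbitrary: p)
  case 0
  then have "p = 0" by (intro poly_eqI) auto
  then show ?case by simp
next
  case (Suc N)
  define \<alpha> where "\<alpha> = coeff p N / legendre_lead N"
  define p' where "p' = p - smult \<alpha> (legendre N)"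
  have "\<forall>i\<ge>N. coeff p' i = 0"
  proof safe
    fix i assume "N \<le> i"
    then consider "i = N" | "i > N" by linarith
    then show "coeff p' i = 0"
      by cases (use Suc.prems legendre_lead_pos[of N] in
          \<open>auto simp: p'_def \<alpha>_def coeff_legendre_top coeff_legendre_above\<close>)
  qed
  from Suc.IH[OF this]
  have p': "p' = (\<Sum>n<N. smult (poly_inner p' (legendre n) / legendre_sqnorm n) (legendre n))" .
  have "poly_inner p' (legendre n) = poly_inner p (legendre n)" if "n < N" for n
    using that
    by (simp add: p'_def poly_inner_add_left[of p "- smult \<alpha> (legendre N)", simplified]
        poly_inner_smult_left poly_inner_legendre_orthogonal flip: smult_minus_left)
  with p' have p: "p = (\<Sum>n<N. smult (poly_inner p (legendre n) / legendre_sqnorm n) (legendre n)) +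
      smult \<alpha> (legendre N)"
    unfolding p'_def by (simp add: algebra_simps)
  have "poly_inner p (legendre N) = (\<Sum>n<N. poly_inner p (legendre n) / legendre_sqnorm n *
      poly_inner (legendre n) (legendre N)) + \<alpha> * legendre_sqnorm N"
    by (subst p) (simp add: poly_inner_add_left poly_inner_sum_left poly_inner_smult_left)
  also have "\<dots> = \<alpha> * legendre_sqnorm N" by (simp add: poly_inner_legendre_orthogonal)
  finally have "\<alpha> = poly_inner p (legendre N) / legendre_sqnorm N"
    using legendre_sqnorm_pos[of N] by simp
  then show ?case using p by simp
qed

text \<open>\<open>H\<close> is the Gram matrix of the monomials for \<open>poly_inner\<close> (\<open>Hmat_eq_poly_inner\<close>); expanding in
  the orthogonal basis \<open>legendre 0, \<dots>, legendre (N - 1)\<close> of the polynomials of degree \<open>< N\<close> gives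
  the inverse of its section of size \<open>N\<close>.\<close>
definition gram_inverse :: "nat \<Rightarrow> nat \<Rightarrow> nat \<Rightarrow> real" where
  "gram_inverse N i k =
     (if i < N \<and> k < N then (\<Sum>n<N. coeff (legendre n) i * coeff (legendre n) k / legendre_sqnorm n)
      else 0)"

lemma gram_inverse_commute: "gram_inverse N i k = gram_inverse N k i"
  unfolding gram_inverse_def by (auto simp: mult.commute intro: sum.cong)

lemma Hmat_gram_inverse:
  assumes "i < N" "k < N"
  shows "(\<Sum>j<N. Hmat i j * gram_inverse N j k) = (if i = k then 1 else 0)"
proof -
  have "(\<Sum>j<N. Hmat i j * gram_inverse N j k) =
      (\<Sum>j<N. \<Sum>n<N. coeff (legendre n) j * Hmat j i * (coeff (legendre n) k / legendre_sqnorm n))"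
    using assms
    by (auto simp: gram_inverse_def sum_distrib_left Hmat_commute[of i] intro!: sum.cong)
  also have "\<dots> = (\<Sum>n<N. (\<Sum>j<N. coeff (legendre n) j * Hmat j i) *
      (coeff (legendre n) k / legendre_sqnorm n))"
    by (subst sum.swap) (simp add: sum_distrib_right sum_divide_distrib mult.assoc)
  also have "\<dots> = coeff (\<Sum>n<N. smult (poly_inner (monom 1 i) (legendre n) / legendre_sqnorm n)
      (legendre n)) k"
    by (simp add: coeff_sum sum_coeff_Hmat[OF coeff_legendre_ge] poly_inner_commute)
  also have "(\<Sum>n<N. smult (poly_inner (monom 1 i) (legendre n) / legendre_sqnorm n) (legendre n)) =
      monom 1 i"
    using assms by (intro legendre_expansion[symmetric]) auto
  finally show ?thesis by simp
qed

lemma gram_inverse_Hmat: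
  assumes "i < N" "k < N"
  shows "(\<Sum>j<N. gram_inverse N i j * Hmat j k) = (if i = k then 1 else 0)"
  using Hmat_gram_inverse[OF assms(2,1)]
  by (simp add: gram_inverse_commute[of N i] Hmat_commute[of _ k] mult.commute eq_commute)

lemma Hdag_eq_gram_inverse: "Hdag N = gram_inverse N"
  unfolding Hdag_def
proof (rule the_equality)
  show "(\<forall>i j. \<not> (i < N \<and> j < N) \<longrightarrow> gram_inverse N i j = 0) \<and>
      (\<forall>i<N. \<forall>k<N. (\<Sum>j<N. Hmat i j * gram_inverse N j k) = (if i = k then 1 else 0))"
    by (simp add: Hmat_gram_inverse, simp add: gram_inverse_def)
next
  fix B
  assume B: "(\<forall>i j. \<not> (i < N \<and> j < N) \<longrightarrow> B i j = 0) \<and>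
      (\<forall>i<N. \<forall>k<N. (\<Sum>j<N. Hmat i j * B j k) = (if i = k then 1 else 0))"
  show "B = gram_inverse N"
  proof (intro ext)
    fix j k
    show "B j k = gram_inverse N j k"
    proof (cases "j < N \<and> k < N")
      case True
      \<comment> \<open>a right inverse of \<open>H\<^sub>N\<close> equals its left inverse \<open>gram_inverse N\<close>\<close>
      have "gram_inverse N j k = (\<Sum>l<N. gram_inverse N j l * (if l = k then 1 else 0))"
        using True by (simp add: if_distrib cong: if_cong)
      also have "\<dots> = (\<Sum>l<N. gram_inverse N j l * (\<Sum>i<N. Hmat l i * B i k))"
        using B True by (intro sum.cong) auto
      also have "\<dots> = (\<Sum>i<N. (\<Sum>l<N. gram_inverse N j l * Hmat l i) * B i k)"
        by (simp add: sum_distrib_left sum_distrib_right mult.assoc) (rule sum.swap)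
      also have "\<dots> = (\<Sum>i<N. if j = i then B i k else 0)"
        using True by (intro sum.cong) (simp_all add: gram_inverse_Hmat)
      also have "\<dots> = B j k"
        using True by simp
      finally show ?thesis by simp
    next
      case False
      then show ?thesis using B by (auto simp: gram_inverse_def)
    qed
  qed
qed

lemma gram_inverse_Hmat_eq:
  assumes "k < N"
  shows "(\<Sum>j<N. gram_inverse N k j * Hmat j m) =
      (\<Sum>n<N. coeff (legendre n) k * poly_inner (legendre n) (monom 1 m) / legendre_sqnorm n)"
proof -
  have "(\<Sum>j<N. gram_inverse N k j * Hmat j m) =
      (\<Sum>j<N. \<Sum>n<N. coeff (legendre n) k / legendre_sqnorm n * (coeff (legendre n) j * Hmat j m))"
    using assms by (intro sum.cong refl) (auto simp: gram_inverse_def sum_distrib_right mult.assoc)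
  also have "\<dots> = (\<Sum>n<N. coeff (legendre n) k / legendre_sqnorm n *
      (\<Sum>j<N. coeff (legendre n) j * Hmat j m))"
    by (subst sum.swap) (simp add: sum_distrib_left)
  also have "\<dots> = (\<Sum>n<N. coeff (legendre n) k * poly_inner (legendre n) (monom 1 m) / legendre_sqnorm n)"
    by (simp add: sum_coeff_Hmat[OF coeff_legendre_ge])
  finally show ?thesis .
qed

lemma abs_poly_inner_legendre_monom_le:
  "\<bar>poly_inner (legendre n) (monom 1 m)\<bar> \<le> sqrt (legendre_sqnorm n)"
proof (rule abs_poly_inner_le_sqrt[OF legendre_sqnorm_pos])
  fix x :: real assume "x \<in> {-1..1}"
  then show "\<bar>poly (monom 1 m) x\<bar> \<le> 1"
    by (simp add: poly_monom power_abs power_le_one abs_le_iff)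
qed

lemma abs_gram_inverse_Hmat_le:
  assumes "k < N"
  shows "\<bar>\<Sum>j<N. gram_inverse N k j * Hmat j m\<bar> \<le>
      (\<Sum>n<N. \<bar>coeff (legendre n) k\<bar> / sqrt (legendre_sqnorm n))"
proof -
  have "\<bar>coeff (legendre n) k * poly_inner (legendre n) (monom 1 m) / legendre_sqnorm n\<bar> \<le>
      \<bar>coeff (legendre n) k\<bar> * sqrt (legendre_sqnorm n) / legendre_sqnorm n" for n
    using legendre_sqnorm_pos[of n] abs_poly_inner_legendre_monom_le[of n m]
    by (simp add: abs_mult divide_right_mono mult_left_mono)
  also have "\<bar>coeff (legendre n) k\<bar> * sqrt (legendre_sqnorm n) / legendre_sqnorm n =
      \<bar>coeff (legendre n) k\<bar> / sqrt (legendre_sqnorm n)" for n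
    using legendre_sqnorm_pos[of n] by (simp add: field_simps real_div_sqrt)
  finally show ?thesis
    unfolding gram_inverse_Hmat_eq[OF assms] by (intro order_trans[OF sum_abs] sum_mono)
qed

lemma weighted_gram_inverse_Hmat_le:
  assumes "\<rho> \<ge> 1"
  shows "(\<Sum>k<N. \<rho> ^ k * \<bar>\<Sum>j<N. gram_inverse N k j * Hmat j m\<bar>) \<le>
      sqrt 2 * N * N * (\<rho> * legendre_growth) ^ N"
proof -
  have "1 * 1 \<le> \<rho> * legendre_growth"
    using assms legendre_growth_gt_1 by (intro mult_mono) auto
  then have growth: "\<rho> * legendre_growth \<ge> 1" by simp
  have "(\<Sum>k<N. \<rho> ^ k * \<bar>\<Sum>j<N. gram_inverse N k j * Hmat j m\<bar>) \<le>
      (\<Sum>k<N. \<rho> ^ k * (\<Sum>n<N. \<bar>coeff (legendre n) k\<bar> / sqrt (legendre_sqnorm n)))"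
    using assms by (intro sum_mono mult_left_mono abs_gram_inverse_Hmat_le) auto
  also have "\<dots> = (\<Sum>n<N. (\<Sum>k<N. \<rho> ^ k * \<bar>coeff (legendre n) k\<bar>) / sqrt (legendre_sqnorm n))"
    by (simp add: sum_distrib_left sum_divide_distrib) (rule sum.swap)
  also have "\<dots> \<le> (\<Sum>n<N. sqrt 2 * N * (\<rho> * legendre_growth) ^ N)"
  proof (intro sum_mono)
    fix n assume n: "n \<in> {..<N}"
    have "(\<Sum>k<N. \<rho> ^ k * \<bar>coeff (legendre n) k\<bar>) = (\<Sum>k\<le>n. \<rho> ^ k * \<bar>coeff (legendre n) k\<bar>)"
      using n by (intro sum.mono_neutral_right) (auto simp: coeff_legendre_above)
    also have "\<dots> \<le> sqrt (legendre_sqnorm n) * (sqrt 2 * (n + 1) * (\<rho> * legendre_growth) ^ n)"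
      by (rule weighted_coeff_legendre_le[OF assms])
    finally have "(\<Sum>k<N. \<rho> ^ k * \<bar>coeff (legendre n) k\<bar>) / sqrt (legendre_sqnorm n) \<le>
        sqrt 2 * (n + 1) * (\<rho> * legendre_growth) ^ n"
      using legendre_sqnorm_pos[of n] by (simp add: divide_le_eq mult.commute)
    also have "\<dots> \<le> sqrt 2 * N * (\<rho> * legendre_growth) ^ N"
      using n growth by (intro mult_mono power_increasing) auto
    finally show "(\<Sum>k<N. \<rho> ^ k * \<bar>coeff (legendre n) k\<bar>) / sqrt (legendre_sqnorm n) \<le>
        sqrt 2 * N * (\<rho> * legendre_growth) ^ N" .
  qed
  also have "\<dots> = sqrt 2 * N * N * (\<rho> * legendre_growth) ^ N" by simp
  finally show ?thesis .
qed

subsection \<open>Taylor coefficients of the transfer operator\<close>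

definition transfer_monomial :: "nat \<Rightarrow> (nat \<Rightarrow> complex \<Rightarrow> complex) \<Rightarrow> nat \<Rightarrow> complex \<Rightarrow> complex" where
  "transfer_monomial d \<phi> l = transfer_op d \<phi> (\<lambda>z. z ^ l)"

definition transfer_coeff :: "nat \<Rightarrow> (nat \<Rightarrow> complex \<Rightarrow> complex) \<Rightarrow> nat \<Rightarrow> nat \<Rightarrow> complex" where
  "transfer_coeff d \<phi> j l = taylor_coeff (transfer_monomial d \<phi> l) j"

lemma holomorphic_transfer_monomial:
  assumes "\<forall>i<d. \<phi> i holomorphic_on S" "open S"
  shows "transfer_monomial d \<phi> l holomorphic_on S"
  unfolding transfer_monomial_def transfer_op_def using assms
  by (intro holomorphic_intros holomorphic_on_compose[unfolded o_def, of _ _ "\<lambda>z. z ^ l", simplified])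
    auto

lemma transfer_op_hardy_basis:
  "transfer_op d \<phi> (hardy_basis \<rho> l) = (\<lambda>z. inverse (of_real \<rho>) ^ l * transfer_monomial d \<phi> l z)"
  unfolding transfer_monomial_def transfer_op_def hardy_basis_def
  by (intro ext) (simp add: sum_distrib_left power_divide field_simps)

lemma taylor_coeff_cmult:
  assumes "f holomorphic_on ball 0 R" "R > 0"
  shows "taylor_coeff (\<lambda>z. c * f z) n = c * taylor_coeff f n"
  unfolding taylor_coeff_def using assms by (simp add: higher_deriv_cmult[of f "ball 0 R"])

lemma taylor_coeff_hardy_basis:
  "taylor_coeff (hardy_basis \<rho> k) n = (if n = k then inverse (of_real \<rho>) ^ k else 0)"
proof -
  have "hardy_basis \<rho> k = (\<lambda>z. inverse (of_real \<rho>) ^ k * (z - 0) ^ k)"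
    unfolding hardy_basis_def by (intro ext) (simp add: power_divide field_simps)
  then have "(deriv ^^ n) (hardy_basis \<rho> k) 0 =
      inverse (of_real \<rho>) ^ k * (pochhammer (of_nat (Suc k - n)) n * 0 ^ (k - n))"
    by (simp only: higher_deriv_cmult[of _ UNIV] higher_deriv_power diff_self holomorphic_intros
        open_UNIV UNIV_I)
  moreover have "Suc k - n = 0" if "k < n"
    using that by simp
  ultimately show ?thesis
    unfolding taylor_coeff_def
    by (cases n k rule: linorder_cases) (simp_all add: pochhammer_0_left pochhammer_fact[symmetric])
qed

lemma hardy_inner_hardy_basis:
  assumes "\<rho> > 0"
  shows "hardy_inner \<rho> f (hardy_basis \<rho> k) = taylor_coeff f k * of_real \<rho> ^ k"
proof -
  have "(\<lambda>n. taylor_coeff f n * cnj (taylor_coeff (hardy_basis \<rho> k) n) * of_real (\<rho> ^ (2 * n))) =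
      (\<lambda>n. if n = k then taylor_coeff f k * of_real \<rho> ^ k else 0)"
  proof
    fix n
    have "of_real (\<rho> ^ (2 * k)) = (of_real \<rho> ^ k * of_real \<rho> ^ k :: complex)"
      by (simp add: mult_2 power_add)
    then show "taylor_coeff f n * cnj (taylor_coeff (hardy_basis \<rho> k) n) * of_real (\<rho> ^ (2 * n)) =
        (if n = k then taylor_coeff f k * of_real \<rho> ^ k else 0)"
      using assms by (simp add: taylor_coeff_hardy_basis power_inverse field_simps)
  qed
  then show ?thesis
    unfolding hardy_inner_def using sums_single[of k "\<lambda>_. taylor_coeff f k * of_real \<rho> ^ k"]
    by (simp add: sums_iff)
qed

lemma Lmat_eq_transfer_coeff:
  assumes "\<forall>i<d. \<phi> i holomorphic_on ball 0 R" "R > 0" "\<rho> > 0"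
  shows "Lmat d \<phi> \<rho> k l = of_real (\<rho> ^ k / \<rho> ^ l) * transfer_coeff d \<phi> k l"
  unfolding Lmat_def hardy_inner_hardy_basis[OF assms(3)] transfer_op_hardy_basis transfer_coeff_def
  using taylor_coeff_cmult[OF holomorphic_transfer_monomial[OF assms(1)] assms(2)]
  by (simp add: power_inverse divide_inverse)

lemma norm_deriv_le_of_maps_to_ball:
  assumes holo: "f holomorphic_on S" and maps: "f ` S \<subseteq> ball 0 r"
    and t: "t > 0" and sub: "cball z t \<subseteq> S"
  shows "norm (deriv f z) \<le> r / t"
proof -
  have "norm ((deriv ^^ 1) f z) \<le> fact 1 * r / t ^ 1"
  proof (rule Cauchy_inequality)
    show "f holomorphic_on ball z t"
      using holo sub by (meson ball_subset_cball holomorphic_on_subset subset_trans)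
    show "continuous_on (cball z t) f"
      using holo sub by (meson holomorphic_on_imp_continuous_on holomorphic_on_subset)
    fix x assume "norm (z - x) = t"
    then have "x \<in> S" using sub by (auto simp: dist_norm)
    then have "f x \<in> ball 0 r" using maps by blast
    then show "norm (f x) \<le> r" by simp
  qed (use t in auto)
  then show ?thesis by simp
qed

lemma norm_transfer_monomial_le:
  assumes holo: "\<forall>i<d. \<phi> i holomorphic_on ball 0 R" and maps: "\<forall>i<d. \<phi> i ` ball 0 R \<subseteq> ball 0 r"
    and t: "t > 0" and z: "norm z + t < R"
  shows "norm (transfer_monomial d \<phi> l z) \<le> d * (r / t) * r ^ l"
proof -
  have sub: "cball z t \<subseteq> ball 0 R"
  proof
    fix x assume "x \<in> cball z t"
    then have "norm x \<le> norm z + t"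
      using norm_triangle_ineq[of z "x - z"] by (simp add: dist_norm norm_minus_commute)
    then show "x \<in> ball 0 R" using z by simp
  qed
  have "norm (branch_sign (\<phi> i) * deriv (\<phi> i) z * \<phi> i z ^ l) \<le> 1 * (r / t) * r ^ l" if "i < d" for i
  proof -
    have "z \<in> ball 0 R" using sub t by (meson centre_in_cball less_imp_le subsetD)
    then have "\<phi> i z \<in> ball 0 r" using that maps by blast
    then have "norm (\<phi> i z) \<le> r" by simp
    moreover have "norm (deriv (\<phi> i) z) \<le> r / t"
      using that holo maps t sub by (intro norm_deriv_le_of_maps_to_ball) auto
    moreover have "norm (branch_sign (\<phi> i)) \<le> 1"
      unfolding branch_sign_def by (simp add: norm_sgn)
    ultimately show ?thesis
      unfolding norm_mult norm_power using t
      by (intro mult_mono power_mono) (auto intro: order_trans[OF norm_ge_zero])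
  qed
  then have "(\<Sum>i<d. norm (branch_sign (\<phi> i) * deriv (\<phi> i) z * \<phi> i z ^ l)) \<le> (\<Sum>i<d. 1 * (r / t) * r ^ l)"
    by (intro sum_mono) auto
  then show ?thesis
    unfolding transfer_monomial_def transfer_op_def using norm_sum order_trans by fastforce
qed

lemma norm_transfer_coeff_le:
  assumes holo: "\<forall>i<d. \<phi> i holomorphic_on ball 0 R" and maps: "\<forall>i<d. \<phi> i ` ball 0 R \<subseteq> ball 0 r"
    and s: "0 < s" "s < R"
  shows "norm (transfer_coeff d \<phi> j l) \<le> d * (2 * r / (R - s)) * r ^ l / s ^ j"
proof -
  define t where "t = (R - s) / 2"
  have t: "t > 0" using s unfolding t_def by simp
  have H: "transfer_monomial d \<phi> l holomorphic_on ball 0 R"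
    by (rule holomorphic_transfer_monomial[OF holo open_ball])
  have "norm ((deriv ^^ j) (transfer_monomial d \<phi> l) 0) \<le> fact j * (d * (r / t) * r ^ l) / s ^ j"
  proof (rule Cauchy_inequality)
    show "transfer_monomial d \<phi> l holomorphic_on ball 0 s"
      by (rule holomorphic_on_subset[OF H]) (use s in auto)
    show "continuous_on (cball 0 s) (transfer_monomial d \<phi> l)"
    proof -
      have "cball 0 s \<subseteq> ball (0::complex) R" using s by auto
      then show ?thesis by (meson H holomorphic_on_imp_continuous_on holomorphic_on_subset)
    qed
    fix x :: complex assume "norm (0 - x) = s"
    then have "norm x + t < R" using s unfolding t_def by (simp add: field_simps)
    then show "norm (transfer_monomial d \<phi> l x) \<le> d * (r / t) * r ^ l"
      by (rule norm_transfer_monomial_le[OF holo maps t])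
  qed (use s in auto)
  then show ?thesis unfolding transfer_coeff_def taylor_coeff_def t_def
    by (simp add: norm_divide field_simps)
qed

lemma transfer_coeff_sums:
  assumes "\<forall>i<d. \<phi> i holomorphic_on ball 0 R" "y \<in> ball 0 R"
  shows "(\<lambda>m. transfer_coeff d \<phi> m l * y ^ m) sums transfer_monomial d \<phi> l y"
  using holomorphic_power_series[OF holomorphic_transfer_monomial[OF assms(1) open_ball] assms(2)]
  unfolding transfer_coeff_def taylor_coeff_def by simp

subsection \<open>Change of variables along the inverse branches\<close>

lemma connected_real_avoids:
  fixes A :: "real set"
  assumes "connected A" "y \<notin> A"
  shows "A \<subseteq> {..<y} \<or> A \<subseteq> {y<..}"
proof (rule ccontr)
  assume "\<not> ?thesis"
  then obtain u v where u: "u \<in> A" "\<not> u < y" and v: "v \<in> A" "\<not> v > y" by auto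
  then have "v \<le> y" "y \<le> u" by auto
  with u v assms(1) have "y \<in> A" unfolding connected_iff_interval by metis
  with assms(2) show False by simp
qed

lemma open_interval_subset_image:
  fixes T :: "real \<Rightarrow> real"
  assumes ab: "a < b" and cont: "continuous_on {a<..<b} T"
    and dense: "closure (T ` {a..b}) = {-1..1}"
  shows "{-1<..<1} \<subseteq> T ` {a<..<b}"
proof
  fix y :: real assume y: "y \<in> {-1<..<1}"
  define J where "J = T ` {a<..<b}"
  show "y \<in> J"
  proof (rule ccontr)
    assume "y \<notin> J"
    moreover have "connected J"
      unfolding J_def by (rule connected_continuous_image[OF cont]) simp
    ultimately have "J \<subseteq> {..<y} \<or> J \<subseteq> {y<..}"
      by (rule connected_real_avoids[rotated])
    then obtain c e where ce: "c < e" "{c<..<e} \<subseteq> {-1..1}" "closure J \<inter> {c<..<e} = {}"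
    proof
      assume "J \<subseteq> {..<y}"
      then have "closure J \<subseteq> {..y}" by (intro closure_minimal) auto
      then show ?thesis using y by (intro that[of y 1]) auto
    next
      assume "J \<subseteq> {y<..}"
      then have "closure J \<subseteq> {y..}" by (intro closure_minimal) auto
      then show ?thesis using y by (intro that[of "-1" y]) auto
    qed
    have "{a..b} = {a<..<b} \<union> {a, b}" using ab by auto
    then have "T ` {a..b} = J \<union> {T a, T b}"
      unfolding J_def by auto
    then have "{-1..1} = closure J \<union> {T a, T b}"
      using dense by (simp add: closure_insert)
    with ce have "{c<..<e} \<subseteq> {T a, T b}" by blast
    then have "finite {c<..<e}" by (rule finite_subset) simp
    with infinite_Ioo[OF ce(1)] show False by contradiction
  qed
qed

lemma sgn_eq_of_continuous_nonzero:
  fixes f :: "real \<Rightarrow> real"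
  assumes "continuous_on S f" "connected S" "\<forall>x\<in>S. f x \<noteq> 0" "x \<in> S" "y \<in> S"
  shows "sgn (f x) = sgn (f y)"
proof -
  have "connected (f ` S)" "0 \<notin> f ` S"
    using assms(1-3) connected_continuous_image by auto
  then have "f ` S \<subseteq> {..<0} \<or> f ` S \<subseteq> {0<..}"
    by (rule connected_real_avoids)
  then show ?thesis using assms(4,5) by (auto simp: image_subset_iff sgn_if)
qed

lemma Im_deriv_eq_0_of_real_valued:
  assumes holo: "\<phi> holomorphic_on S" "open S"
    and real: "\<And>x. x \<in> {c<..<e} \<Longrightarrow> of_real x \<in> S \<and> Im (\<phi> (of_real x)) = 0"
    and y: "y \<in> {c<..<e}"
  shows "Im (deriv \<phi> (of_real y)) = 0"
proof -
  have "(\<phi> has_field_derivative deriv \<phi> (of_real y)) (at (of_real y))"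
    using holomorphic_derivI[OF holo] real[OF y] by blast
  then have "((\<lambda>x. Im (\<phi> (of_real x))) has_real_derivative Im (deriv \<phi> (of_real y))) (at y)"
    by (intro has_field_derivative_Im has_vector_derivative_real_field)
  then have "((\<lambda>x. 0) has_real_derivative Im (deriv \<phi> (of_real y))) (at y)"
    by (rule has_field_derivative_transform_within_open[of _ _ _ "{c<..<e}"]) (use y real in auto)
  then show ?thesis using DERIV_const DERIV_unique by blast
qed

lemma lebesgue_set_between_Ioo_Icc:
  fixes J :: "real set"
  assumes "{c<..<e} \<subseteq> J" "J \<subseteq> {c..e}"
  shows "J \<in> sets lebesgue" "negligible ({c..e} - J)"
proof -
  have "{c..e} \<subseteq> {c<..<e} \<union> {c, e}" by auto
  then have J: "J = {c<..<e} \<union> (J \<inter> {c, e})" and diff: "{c..e} - J \<subseteq> {c, e}"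
    using assms by blast+
  have "J \<inter> {c, e} \<in> sets lebesgue"
    by (rule negligible_imp_sets, rule negligible_subset[of "{c, e}"]) auto
  moreover have "{c<..<e} \<in> sets lebesgue"
    by (metis borel_open open_greaterThanLessThan sets_completionI_sets sets_lborel)
  ultimately show "J \<in> sets lebesgue"
    by (subst J) (rule sets.Un)
  show "negligible ({c..e} - J)"
    by (rule negligible_subset[OF _ diff]) simp
qed

lemma has_integral_change_of_variables_left_inverse:
  fixes T g g' :: "real \<Rightarrow> real"
  assumes cover: "{-1<..<1} \<subseteq> T ` {a<..<b}" and image: "T ` {a<..<b} \<subseteq> {-1..1}"
    and left_inverse: "\<And>x. x \<in> {a<..<b} \<Longrightarrow> g (T x) = x"
    and g_deriv: "\<And>y. y \<in> {-1..1} \<Longrightarrow> (g has_real_derivative g' y) (at y)"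
    and g'_cont: "continuous_on {-1..1} g'"
  shows "((\<lambda>x. T x ^ j * x ^ l) has_integral
      integral {-1..1} (\<lambda>y. \<bar>g' y\<bar> * (y ^ j * g y ^ l))) {a..b}"
proof -
  define J where "J = T ` {a<..<b}"
  define h where "h y = \<bar>g' y\<bar> * (y ^ j * g y ^ l)" for y
  note J = lebesgue_set_between_Ioo_Icc[OF cover image, folded J_def]
  have "continuous_on {-1..1} g"
    using g_deriv DERIV_isCont by (blast intro: continuous_at_imp_continuous_on)
  then have "h absolutely_integrable_on {-1..1}"
    unfolding h_def by (intro absolutely_integrable_continuous_real continuous_intros g'_cont)
  moreover have "negligible {x \<in> {-1..1} - J. h x \<noteq> 0}"
    by (rule negligible_subset[OF J(2)]) blast
  moreover have "negligible {x \<in> J - {-1..1}. h x \<noteq> 0}"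
    using image unfolding J_def by (simp add: Diff_eq_empty_iff[THEN iffD2])
  ultimately have "h absolutely_integrable_on J" "integral J h = integral {-1..1} h"
    using absolutely_integrable_spike_set_eq integral_spike_set by blast+
  moreover have "\<bar>g' y\<bar> * (T (g y) ^ j * g y ^ l) = h y" if "y \<in> J" for y
    using that left_inverse unfolding J_def h_def by auto
  ultimately have transformed: "(\<lambda>y. \<bar>g' y\<bar> * (T (g y) ^ j * g y ^ l)) absolutely_integrable_on J \<and>
      integral J (\<lambda>y. \<bar>g' y\<bar> * (T (g y) ^ j * g y ^ l)) = integral {-1..1} h"
    by (metis (no_types, lifting) absolutely_integrable_spike[OF _ negligible_empty]
        integral_cong Diff_iff)
  have g_inj: "inj_on g J" and g_image: "g ` J = {a<..<b}"
    using left_inverse unfolding J_def by (auto simp: image_image inj_on_def)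
  have g_deriv_J: "(g has_real_derivative g' y) (at y within J)" if "y \<in> J" for y
    using that image unfolding J_def by (auto intro: has_field_derivative_at_within g_deriv)
  have "(\<lambda>x. T x ^ j * x ^ l) absolutely_integrable_on {a<..<b} \<and>
      integral {a<..<b} (\<lambda>x. T x ^ j * x ^ l) = integral {-1..1} h"
    using transformed g_image
      has_absolute_integral_change_of_variables_1'[OF J(1) g_deriv_J g_inj, of "\<lambda>x. T x ^ j * x ^ l"]
    by simp
  then show ?thesis
    unfolding has_integral_Icc_iff_Ioo h_def
    by (metis absolutely_integrable_on_def integrable_integral)
qed

lemma continuous_on_deriv_of_real:
  assumes "\<phi> holomorphic_on ball 0 R" "R > 1"
  shows "continuous_on {-1..1} (\<lambda>y. deriv \<phi> (of_real y))"
proof -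
  have "continuous_on (ball 0 R) (deriv \<phi>)"
    by (intro holomorphic_on_imp_continuous_on holomorphic_deriv assms open_ball)
  then show ?thesis
    by (rule continuous_on_compose2[of _ _ _ of_real]) (use assms in \<open>auto intro: continuous_intros\<close>)
qed

lemma has_real_derivative_Re_of_real:
  assumes "\<phi> holomorphic_on ball 0 R" "R > 1" "y \<in> {-1..1}"
  shows "((\<lambda>x. Re (\<phi> (of_real x))) has_real_derivative Re (deriv \<phi> (of_real y))) (at y)"
proof -
  have "of_real y \<in> ball (0::complex) R" using assms(2,3) by auto
  then have "(\<phi> has_field_derivative deriv \<phi> (of_real y)) (at (of_real y))"
    by (rule holomorphic_derivI[OF assms(1) open_ball])
  then show ?thesis
    by (intro has_field_derivative_Re has_vector_derivative_real_field)
qed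

lemma left_inverse_deriv_mult_eq_1:
  fixes T g :: "real \<Rightarrow> real"
  assumes "(T has_real_derivative D) (at x)" "(g has_real_derivative E) (at (T x))"
    and "open S" "x \<in> S" "\<And>t. t \<in> S \<Longrightarrow> g (T t) = t"
  shows "E * D = 1"
proof -
  have "((\<lambda>t. g (T t)) has_real_derivative E * D) (at x)"
    using DERIV_chain'[OF assms(1,2)] by simp
  then have "((\<lambda>t. t) has_real_derivative E * D) (at x)"
    by (rule has_field_derivative_transform_within_open[OF _ assms(3,4)]) (use assms(5) in auto)
  then show ?thesis using DERIV_ident DERIV_unique by blast
qed

lemma branch_sign_mult_deriv:
  assumes holo: "\<phi> holomorphic_on ball 0 R" and R: "R > 1"
    and real: "\<And>x. x \<in> {-1<..<1} \<Longrightarrow> Im (\<phi> (of_real x)) = 0"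
    and nonzero: "\<And>x. x \<in> {-1<..<1} \<Longrightarrow> deriv \<phi> (of_real x) \<noteq> 0"
    and y: "y \<in> {-1<..<1}"
  shows "branch_sign \<phi> * deriv \<phi> (of_real y) = of_real \<bar>Re (deriv \<phi> (of_real y))\<bar>"
proof -
  define g' where "g' x = Re (deriv \<phi> (of_real x))" for x
  have in_ball: "of_real x \<in> ball (0::complex) R" if "x \<in> {-1<..<1}" for x
    using that R by auto
  have deriv_real: "deriv \<phi> (of_real x) = of_real (g' x)" if "x \<in> {-1<..<1}" for x
    using Im_deriv_eq_0_of_real_valued[OF holo open_ball _ that] in_ball real
    unfolding g'_def by (simp add: complex_eq_iff)
  have "continuous_on {-1<..<1} g'"
    unfolding g'_def
    by (intro continuous_intros continuous_on_subset[OF continuous_on_deriv_of_real[OF holo R]]) auto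
  moreover have "\<forall>x\<in>{-1<..<1}. g' x \<noteq> 0"
    using nonzero deriv_real by auto
  ultimately have "sgn (g' y) = sgn (g' 0)"
    using y by (intro sgn_eq_of_continuous_nonzero) auto
  then have "\<bar>g' y\<bar> = g' y * sgn (g' 0)"
    by (metis abs_sgn)
  moreover have "branch_sign \<phi> = of_real (sgn (g' 0))"
    unfolding branch_sign_def using deriv_real[of 0] by (simp add: sgn_of_real)
  ultimately show ?thesis
    using deriv_real[OF y] unfolding g'_def by (simp add: mult.commute)
qed

lemma inverse_branch_real_nonsingular:
  fixes T :: "real \<Rightarrow> real" and \<phi> :: "complex \<Rightarrow> complex"
  assumes cover: "{-1<..<1} \<subseteq> T ` {a<..<b}" and T_image: "T ` {a<..<b} \<subseteq> {-1..1}"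
    and T_deriv: "\<forall>x\<in>{a<..<b}. \<exists>D. (T has_real_derivative D) (at x)"
    and holo: "\<phi> holomorphic_on ball 0 R" and R: "R > 1"
    and inverse: "\<forall>x\<in>{a<..<b}. \<phi> (of_real (T x)) = of_real x"
    and y: "y \<in> {-1<..<1}"
  shows "Im (\<phi> (of_real y)) = 0" and "deriv \<phi> (of_real y) \<noteq> 0"
proof -
  obtain x where x: "x \<in> {a<..<b}" "y = T x" using y cover by blast
  then show "Im (\<phi> (of_real y)) = 0" using inverse by simp
  obtain D where D: "(T has_real_derivative D) (at x)" using T_deriv x(1) by blast
  have "T x \<in> {-1..1}" using x T_image by blast
  \<comment> \<open>\<open>Re \<circ> \<phi> \<circ> of_real\<close> is a left inverse of \<open>T\<close>, so the chain rule forces \<open>\<phi>' \<noteq> 0\<close>\<close>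
  from left_inverse_deriv_mult_eq_1[OF D has_real_derivative_Re_of_real[OF holo R this] _ x(1)]
  have "Re (deriv \<phi> (of_real y)) * D = 1"
    using inverse x(2) by simp
  then show "deriv \<phi> (of_real y) \<noteq> 0" by auto
qed

lemma has_integral_branch_term:
  fixes j l :: nat
  assumes holo: "\<phi> holomorphic_on ball 0 R" and R: "R > 1"
    and real: "\<And>x. x \<in> {-1<..<1} \<Longrightarrow> Im (\<phi> (of_real x)) = 0"
    and nonzero: "\<And>x. x \<in> {-1<..<1} \<Longrightarrow> deriv \<phi> (of_real x) \<noteq> 0"
  defines "h \<equiv> \<lambda>y. \<bar>Re (deriv \<phi> (of_real y))\<bar> * (y ^ j * Re (\<phi> (of_real y)) ^ l)"
  shows "((\<lambda>y. of_real y ^ j * (branch_sign \<phi> * deriv \<phi> (of_real y) * \<phi> (of_real y) ^ l))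
      has_integral of_real (integral {-1..1} h)) {-1..1}"
proof (rule has_integral_spike[of "{-1, 1}"])
  have "continuous_on {-1..1} (\<lambda>y. \<phi> (of_real y))"
    by (rule continuous_on_compose2[OF holomorphic_on_imp_continuous_on[OF holo]])
      (use R in \<open>auto intro: continuous_intros\<close>)
  then have "h integrable_on {-1..1}"
    unfolding h_def
    by (intro integrable_continuous_interval continuous_intros continuous_on_deriv_of_real[OF holo R])
  then show "((\<lambda>y. complex_of_real (h y)) has_integral of_real (integral {-1..1} h)) {-1..1}"
    by (rule has_integral_of_real[OF integrable_integral])
  fix y :: real assume "y \<in> {-1..1} - {-1, 1}"
  then have y: "y \<in> {-1<..<1}" by auto
  then have "\<phi> (of_real y) = of_real (Re (\<phi> (of_real y)))"
    using real by (simp add: complex_eq_iff)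
  with branch_sign_mult_deriv[OF holo R real nonzero y]
  show "of_real y ^ j * (branch_sign \<phi> * deriv \<phi> (of_real y) * \<phi> (of_real y) ^ l) = of_real (h y)"
    unfolding h_def by (simp add: mult_ac)
qed simp

lemma branch_integral:
  fixes T :: "real \<Rightarrow> real" and \<phi> :: "complex \<Rightarrow> complex"
  assumes ab: "a < b" and sub: "{a..b} \<subseteq> {-1..1}" and T_maps: "T ` {-1..1} \<subseteq> {-1..1}"
    and dense: "closure (T ` {a..b}) = {-1..1}"
    and T_deriv: "\<forall>x\<in>{a<..<b}. \<exists>D. (T has_real_derivative D) (at x)"
    and holo: "\<phi> holomorphic_on ball 0 R" and R: "R > 1"
    and inverse: "\<forall>x\<in>{a<..<b}. \<phi> (of_real (T x)) = of_real x"
  shows "(\<lambda>x. T x ^ j * x ^ l) integrable_on {a..b}"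
    and "((\<lambda>y. of_real y ^ j * (branch_sign \<phi> * deriv \<phi> (of_real y) * \<phi> (of_real y) ^ l))
      has_integral of_real (integral {a..b} (\<lambda>x. T x ^ j * x ^ l))) {-1..1}"
proof -
  define g where "g y = Re (\<phi> (of_real y))" for y
  define g' where "g' y = Re (deriv \<phi> (of_real y))" for y
  have "continuous_on {a<..<b} T"
    using T_deriv by (blast intro: continuous_at_imp_continuous_on DERIV_isCont)
  then have cover: "{-1<..<1} \<subseteq> T ` {a<..<b}"
    by (rule open_interval_subset_image[OF ab _ dense])
  have T_image: "T ` {a<..<b} \<subseteq> {-1..1}"
    using sub T_maps by fastforce
  have left_inverse: "g (T x) = x" if "x \<in> {a<..<b}" for x
    using that inverse unfolding g_def by simp
  have g_deriv: "(g has_real_derivative g' y) (at y)" if "y \<in> {-1..1}" for y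
    unfolding g_def g'_def by (rule has_real_derivative_Re_of_real[OF holo R that])
  have g'_cont: "continuous_on {-1..1} g'"
    unfolding g'_def by (intro continuous_intros continuous_on_deriv_of_real[OF holo R])
  have "((\<lambda>x. T x ^ j * x ^ l) has_integral integral {-1..1} (\<lambda>y. \<bar>g' y\<bar> * (y ^ j * g y ^ l))) {a..b}"
    by (rule has_integral_change_of_variables_left_inverse[OF cover T_image left_inverse g_deriv
          g'_cont])
  then show "(\<lambda>x. T x ^ j * x ^ l) integrable_on {a..b}"
    and "((\<lambda>y. of_real y ^ j * (branch_sign \<phi> * deriv \<phi> (of_real y) * \<phi> (of_real y) ^ l))
      has_integral of_real (integral {a..b} (\<lambda>x. T x ^ j * x ^ l))) {-1..1}"
    using has_integral_branch_term[OF holo R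
        inverse_branch_real_nonsingular[OF cover T_image T_deriv holo R inverse]]
    unfolding g_def g'_def by (auto simp: integral_unique)
qed

subsection \<open>The matrix \<open>G\<close> factors through \<open>H\<close>\<close>

lemma has_integral_power_Hmat:
  "((\<lambda>y::real. complex_of_real y ^ (j + i)) has_integral 2 * of_real (Hmat j i)) {-1..1}"
proof -
  have "((\<lambda>y::real. y ^ (j + i)) has_integral integral {-1..1} (\<lambda>y::real. y ^ (j + i))) {-1..1}"
    by (intro integrable_integral integrable_continuous_interval continuous_intros)
  from has_integral_of_real[OF this] show ?thesis
    unfolding Hmat_def by simp
qed

lemma sums_integral_of_dominated_series:
  fixes f :: "nat \<Rightarrow> real \<Rightarrow> 'a::banach"
  assumes cont: "\<And>i. continuous_on {a..b} (f i)"
    and bound: "\<And>i y. y \<in> {a..b} \<Longrightarrow> norm (f i y) \<le> M i" and "summable M"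
    and integral: "\<And>i. (f i has_integral I i) {a..b}"
    and series: "\<And>y. y \<in> {a..b} \<Longrightarrow> (\<lambda>i. f i y) sums F y"
  shows "I sums integral {a..b} F"
proof -
  have uniform: "uniform_limit {a..b} (\<lambda>n y. \<Sum>i<n. f i y) (\<lambda>y. \<Sum>i. f i y) sequentially"
    by (rule Weierstrass_m_test[OF bound \<open>summable M\<close>])
  have partial_cont: "continuous_on {a..b} (\<lambda>y. \<Sum>i<n. f i y)" for n
    using cont by (intro continuous_on_sum) auto
  obtain P J where P: "\<And>n. ((\<lambda>y. \<Sum>i<n. f i y) has_integral P n) {a..b}"
    and J: "((\<lambda>y. \<Sum>i. f i y) has_integral J) {a..b}" and lim: "P \<longlonglongrightarrow> J"
    using uniform_limit_integral[OF uniform partial_cont] by auto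
  have "P = (\<lambda>n. \<Sum>i<n. I i)"
    using has_integral_unique[OF P has_integral_sum[OF _ integral]] by auto
  moreover have "(F has_integral J) {a..b}"
    using J by (rule has_integral_eq[rotated]) (metis series sums_unique)
  ultimately show ?thesis
    using lim unfolding sums_def by (simp add: integral_unique)
qed

lemma Hmat_transfer_coeff_sums_integral:
  assumes holo: "\<forall>i<d. \<phi> i holomorphic_on ball 0 R" and maps: "\<forall>i<d. \<phi> i ` ball 0 R \<subseteq> ball 0 r"
    and R: "1 < R"
  shows "(\<lambda>m. of_real (Hmat j m) * transfer_coeff d \<phi> m l) sums
      (integral {-1..1} (\<lambda>y. of_real y ^ j * transfer_monomial d \<phi> l (of_real y)) / 2)"
proof -
  define s where "s = (1 + R) / 2"
  have s: "1 < s" "s < R" using R unfolding s_def by auto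
  define K where "K = d * (2 * r / (R - s)) * r ^ l"
  have "(\<lambda>i. transfer_coeff d \<phi> i l * (2 * of_real (Hmat j i))) sums
      integral {-1..1} (\<lambda>y. of_real y ^ j * transfer_monomial d \<phi> l (of_real y))"
  proof (rule sums_integral_of_dominated_series)
    fix i and y :: real assume y: "y \<in> {-1..1}"
    then have "norm (complex_of_real y ^ (j + i)) \<le> 1"
      by (simp add: norm_power power_le_one abs_le_iff)
    then have "norm (transfer_coeff d \<phi> i l * of_real y ^ (j + i)) \<le> norm (transfer_coeff d \<phi> i l)"
      unfolding norm_mult by (simp add: mult_left_le)
    also have "\<dots> \<le> K * (1 / s) ^ i"
      unfolding K_def using norm_transfer_coeff_le[OF holo maps, of s i l] s by (simp add: power_one_over)
    finally show "norm (transfer_coeff d \<phi> i l * of_real y ^ (j + i)) \<le> K * (1 / s) ^ i" .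
    have "of_real y \<in> ball (0::complex) R" using y R by auto
    from sums_mult[OF transfer_coeff_sums[OF holo this], of "of_real y ^ j"]
    show "(\<lambda>i. transfer_coeff d \<phi> i l * of_real y ^ (j + i)) sums
        (of_real y ^ j * transfer_monomial d \<phi> l (of_real y))"
      by (simp add: power_add algebra_simps)
  next
    show "summable (\<lambda>i. K * (1 / s) ^ i)"
      using s by (intro summable_mult summable_geometric) auto
  qed (auto intro!: continuous_intros has_integral_mult_right has_integral_power_Hmat)
  from sums_divide[OF this, of 2] show ?thesis
    by (simp add: mult.commute)
qed

lemma interval_inter_subset_endpoints:
  fixes a1 b1 a2 b2 :: real
  assumes "{a1<..<b1} \<inter> {a2<..<b2} = {}" "a2 < b2"
  shows "{a1..b1} \<inter> {a2..b2} \<subseteq> {a1, b1}"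
proof
  fix x assume x: "x \<in> {a1..b1} \<inter> {a2..b2}"
  show "x \<in> {a1, b1}"
  proof (rule ccontr)
    assume "x \<notin> {a1, b1}"
    with x have "max a1 a2 < min b1 b2" using assms(2) by (auto simp: max_def min_def)
    then have "(max a1 a2 + min b1 b2) / 2 \<in> {a1<..<b1} \<inter> {a2<..<b2}" by auto
    with assms(1) show False by blast
  qed
qed

lemma full_branch_settingD:
  assumes "full_branch_setting T d a b \<phi> r R"
  shows "1 < r" "r < R" "T ` {-1..1} \<subseteq> {-1..1}" "(\<Union>i<d. {a i..b i}) = {-1..1}"
    "\<forall>i<d. \<phi> i holomorphic_on ball 0 R" "\<forall>i<d. \<phi> i ` ball 0 R \<subseteq> ball 0 r"
    "\<forall>i<d. \<forall>k<d. i \<noteq> k \<longrightarrow> {a i<..<b i} \<inter> {a k<..<b k} = {}"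
  using assms unfolding full_branch_setting_def by simp_all

lemma full_branch_setting_branchD:
  assumes "full_branch_setting T d a b \<phi> r R" "i < d"
  shows "a i < b i" "closure (T ` {a i..b i}) = {-1..1}"
    "\<phi> i holomorphic_on ball 0 R" "\<forall>x\<in>{a i<..<b i}. \<phi> i (of_real (T x)) = of_real x"
    and "\<forall>x\<in>{a i<..<b i}. \<exists>D. (T has_real_derivative D) (at x)"
proof -
  show "a i < b i" "closure (T ` {a i..b i}) = {-1..1}"
    "\<phi> i holomorphic_on ball 0 R" "\<forall>x\<in>{a i<..<b i}. \<phi> i (of_real (T x)) = of_real x"
    using assms unfolding full_branch_setting_def by simp_all
  have "\<forall>x\<in>{a i<..<b i}. \<exists>D. (T has_real_derivative D) (at x) \<and> D \<noteq> 0"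
    using assms unfolding full_branch_setting_def by simp
  then show "\<forall>x\<in>{a i<..<b i}. \<exists>D. (T has_real_derivative D) (at x)"
    by blast
qed

lemma integral_transfer_monomial_eq_Gmat:
  assumes setting: "full_branch_setting T d a b \<phi> r R"
  shows "integral {-1..1} (\<lambda>y. of_real y ^ j * transfer_monomial d \<phi> l (of_real y)) =
      2 * of_real (Gmat T j l)"
proof -
  note S = full_branch_settingD[OF setting]
  have R: "1 < R" using S(1,2) by linarith
  define I where "I i = integral {a i..b i} (\<lambda>x. T x ^ j * x ^ l)" for i
  have "{a i..b i} \<subseteq> {-1..1}" if "i < d" for i using S(4) that by blast
  note branch = branch_integral[OF full_branch_setting_branchD(1)[OF setting] this S(3)
      full_branch_setting_branchD(2,5,3)[OF setting] R full_branch_setting_branchD(4)[OF setting]]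
  have overlaps: "pairwise (\<lambda>i i'. negligible ({a i..b i} \<inter> {a i'..b i'})) {..<d}"
  proof (rule pairwiseI)
    fix i i' assume "i \<in> {..<d}" "i' \<in> {..<d}" "i \<noteq> i'"
    then have "{a i..b i} \<inter> {a i'..b i'} \<subseteq> {a i, b i}"
      using S(7) full_branch_setting_branchD(1)[OF setting]
      by (intro interval_inter_subset_endpoints) auto
    then show "negligible ({a i..b i} \<inter> {a i'..b i'})"
      by (rule negligible_subset[rotated]) simp
  qed
  have "((\<lambda>x. T x ^ j * x ^ l) has_integral (\<Sum>i<d. I i)) (\<Union>i<d. {a i..b i})"
    unfolding I_def by (rule has_integral_UN[OF _ _ overlaps]) (auto intro: integrable_integral branch(1))
  then have "2 * Gmat T j l = (\<Sum>i<d. I i)"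
    unfolding Gmat_def S(4) by (simp add: integral_unique)
  then have G: "2 * complex_of_real (Gmat T j l) = (\<Sum>i<d. of_real (I i))"
    by (metis of_real_mult of_real_numeral of_real_sum)
  have "((\<lambda>y. of_real y ^ j * transfer_monomial d \<phi> l (of_real y)) has_integral
      (\<Sum>i<d. of_real (I i))) {-1..1}"
    unfolding transfer_monomial_def transfer_op_def sum_distrib_left I_def
    by (intro has_integral_sum branch(2)) auto
  then show ?thesis
    unfolding G by (rule integral_unique)
qed

lemma Hmat_transfer_coeff_sums_Gmat:
  assumes setting: "full_branch_setting T d a b \<phi> r R"
  shows "(\<lambda>m. of_real (Hmat j m) * transfer_coeff d \<phi> m l) sums of_real (Gmat T j l)"
proof -
  note S = full_branch_settingD[OF setting]
  have R: "1 < R" using S(1,2) by linarith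
  from Hmat_transfer_coeff_sums_integral[OF S(5,6) R, of j l] show ?thesis
    unfolding integral_transfer_monomial_eq_Gmat[OF setting] by simp
qed

subsection \<open>Entrywise error of the approximation\<close>

lemma Hdag_Gmat_minus_transfer_coeff_sums:
  assumes setting: "full_branch_setting T d a b \<phi> r R" and k: "k < N"
  shows "(\<lambda>m. of_real (\<Sum>j<N. gram_inverse N k j * Hmat j (m + N)) * transfer_coeff d \<phi> (m + N) l) sums
      (of_real (\<Sum>j<N. Hdag N k j * Gmat T j l) - transfer_coeff d \<phi> k l)"
proof -
  define W where "W m = (\<Sum>j<N. gram_inverse N k j * Hmat j m)" for m
  have "(\<lambda>m. \<Sum>j<N. of_real (gram_inverse N k j) * (of_real (Hmat j m) * transfer_coeff d \<phi> m l)) sums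
      (\<Sum>j<N. of_real (gram_inverse N k j) * of_real (Gmat T j l))"
    by (intro sums_sum sums_mult Hmat_transfer_coeff_sums_Gmat[OF setting])
  then have full_sums: "(\<lambda>m. of_real (W m) * transfer_coeff d \<phi> m l) sums
      of_real (\<Sum>j<N. Hdag N k j * Gmat T j l)"
    unfolding W_def Hdag_eq_gram_inverse by (simp add: sum_distrib_right mult.assoc)
  have "(\<Sum>m<N. of_real (W m) * transfer_coeff d \<phi> m l) =
      (\<Sum>m<N. if m = k then transfer_coeff d \<phi> m l else 0)"
    by (intro sum.cong refl) (simp add: W_def gram_inverse_Hmat[OF k])
  with sums_split_initial_segment[OF full_sums, of N] k show ?thesis
    unfolding W_def by simp
qed

lemma weighted_norm_Hdag_Gmat_minus_transfer_coeff_le: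
  assumes setting: "full_branch_setting T d a b \<phi> r R"
    and radii: "1 \<le> \<rho>" "1 < s" "s < R" and k: "k < N"
  shows "\<rho> ^ k * norm (of_real (\<Sum>j<N. Hdag N k j * Gmat T j l) - transfer_coeff d \<phi> k l) \<le>
    sqrt 2 * N * N * (\<rho> * legendre_growth) ^ N * (d * (2 * r / (R - s)) * r ^ l) *
      (1 / s) ^ N * (s / (s - 1))"
proof -
  note S = full_branch_settingD[OF setting]
  define W where "W m = (\<Sum>j<N. gram_inverse N k j * Hmat j m)" for m
  define B where "B = sqrt 2 * N * N * (\<rho> * legendre_growth) ^ N"
  define c where "c = B * (d * (2 * r / (R - s)) * r ^ l) * (1 / s) ^ N / \<rho> ^ k"
  have "\<rho> ^ k * \<bar>W m\<bar> \<le> (\<Sum>k<N. \<rho> ^ k * \<bar>\<Sum>j<N. gram_inverse N k j * Hmat j m\<bar>)" for m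
    unfolding W_def using k radii by (intro member_le_sum) auto
  then have "\<rho> ^ k * \<bar>W m\<bar> \<le> B" for m
    unfolding B_def by (rule order_trans[OF _ weighted_gram_inverse_Hmat_le[OF radii(1)]])
  then have W_le: "\<bar>W m\<bar> \<le> B / \<rho> ^ k" for m
    using radii by (simp add: field_simps)
  have tail_le: "norm (of_real (W (m + N)) * transfer_coeff d \<phi> (m + N) l) \<le> c * (1 / s) ^ m" for m
  proof -
    have "norm (of_real (W (m + N)) * transfer_coeff d \<phi> (m + N) l) \<le>
        (B / \<rho> ^ k) * (d * (2 * r / (R - s)) * r ^ l / s ^ (m + N))"
      unfolding norm_mult norm_of_real using radii W_le[of 0]
      by (intro mult_mono W_le norm_transfer_coeff_le[OF S(5,6)]) auto
    also have "\<dots> = c * (1 / s) ^ m" unfolding c_def by (simp add: power_add field_simps)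
    finally show ?thesis .
  qed
  have geometric: "(\<lambda>m. c * (1 / s) ^ m) sums (c * (s / (s - 1)))"
    using radii geometric_sums[of "1 / s"] sums_mult by (fastforce simp: field_simps)
  have "norm (of_real (\<Sum>j<N. Hdag N k j * Gmat T j l) - transfer_coeff d \<phi> k l) \<le> c * (s / (s - 1))"
    using norm_suminf_le[OF tail_le sums_summable[OF geometric]] sums_unique[OF geometric]
      sums_unique[OF Hdag_Gmat_minus_transfer_coeff_sums[OF setting k]]
    unfolding W_def by simp
  then have "\<rho> ^ k * norm (of_real (\<Sum>j<N. Hdag N k j * Gmat T j l) - transfer_coeff d \<phi> k l) \<le>
      \<rho> ^ k * (c * (s / (s - 1)))"
    using radii by (intro mult_left_mono) auto
  also have "\<rho> ^ k * (c * (s / (s - 1))) =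
      B * (d * (2 * r / (R - s)) * r ^ l) * (1 / s) ^ N * (s / (s - 1))"
    unfolding c_def using radii by simp
  finally show ?thesis
    unfolding B_def .
qed

lemma norm_approx_mat_minus_Lmat_inside:
  assumes setting: "full_branch_setting T d a b \<phi> r R"
    and radii: "r < \<rho>" "\<rho> < s" "s < R" and kl: "k < N" "l < N"
  shows "norm (approx_mat T \<rho> N k l - Lmat d \<phi> \<rho> k l) \<le>
    (r / \<rho>) ^ l * (d * (2 * r / (R - s)) * (sqrt 2 * N * N * (\<rho> * legendre_growth / s) ^ N)
      * (s / (s - 1)))"
proof -
  note S = full_branch_settingD[OF setting]
  have \<rho>: "\<rho> > 1" and \<rho>0: "\<rho> > 0" and s: "s > 1" and R0: "R > 0"
    using S(1) radii by auto
  have "approx_mat T \<rho> N k l - Lmat d \<phi> \<rho> k l =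
      of_real (\<rho> ^ k / \<rho> ^ l) * (of_real (\<Sum>j<N. Hdag N k j * Gmat T j l) - transfer_coeff d \<phi> k l)"
    using kl \<rho> unfolding approx_mat_def Lmat_eq_transfer_coeff[OF S(5) R0 \<rho>0]
    by (simp add: power_int_minus algebra_simps divide_inverse)
  then have "norm (approx_mat T \<rho> N k l - Lmat d \<phi> \<rho> k l) =
      \<rho> ^ k * norm (of_real (\<Sum>j<N. Hdag N k j * Gmat T j l) - transfer_coeff d \<phi> k l) / \<rho> ^ l"
    using \<rho> by (simp add: norm_mult norm_divide norm_power)
  also have "\<dots> \<le> sqrt 2 * N * N * (\<rho> * legendre_growth) ^ N * (d * (2 * r / (R - s)) * r ^ l) *
      (1 / s) ^ N * (s / (s - 1)) / \<rho> ^ l"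
    using \<rho> s radii kl
    by (intro divide_right_mono weighted_norm_Hdag_Gmat_minus_transfer_coeff_le[OF setting]) auto
  also have "\<dots> = (r / \<rho>) ^ l * (d * (2 * r / (R - s)) * (sqrt 2 * N * N * (\<rho> * legendre_growth / s) ^ N)
      * (s / (s - 1)))"
    by (simp add: field_simps power_divide power_mult_distrib)
  finally show ?thesis .
qed

lemma norm_approx_mat_minus_Lmat_outside:
  assumes setting: "full_branch_setting T d a b \<phi> r R"
    and radii: "r < \<rho>" "\<rho> < s" "s < R" and kl: "\<not> (k < N \<and> l < N)"
  shows "norm (approx_mat T \<rho> N k l - Lmat d \<phi> \<rho> k l) \<le> d * (2 * r / (R - s)) * (\<rho> / s) ^ k * (r / \<rho>) ^ l"
proof -
  note S = full_branch_settingD[OF setting]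
  have \<rho>: "\<rho> > 0" and R0: "R > 0" using S(1) radii by auto
  have "norm (approx_mat T \<rho> N k l - Lmat d \<phi> \<rho> k l) = (\<rho> ^ k / \<rho> ^ l) * norm (transfer_coeff d \<phi> k l)"
    using kl \<rho> S(1,2) unfolding approx_mat_def Lmat_eq_transfer_coeff[OF S(5) R0 \<rho>]
    by (auto simp: norm_mult norm_divide norm_power)
  also have "\<dots> \<le> (\<rho> ^ k / \<rho> ^ l) * (d * (2 * r / (R - s)) * r ^ l / s ^ k)"
    using \<rho> radii by (intro mult_left_mono norm_transfer_coeff_le[OF S(5,6)]) auto
  also have "\<dots> = d * (2 * r / (R - s)) * (\<rho> / s) ^ k * (r / \<rho>) ^ l"
    using \<rho> radii by (simp add: power_divide field_simps)
  finally show ?thesis .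
qed

subsection \<open>Summing the entrywise bounds\<close>

lemma l2_opnorm_le_sum_entries:
  assumes entry: "\<And>k j. norm (M k j) \<le> bound k j"
    and sum: "\<And>n m. (\<Sum>k<m. \<Sum>j<n. bound k j) \<le> B"
  shows "l2_opnorm M \<le> ennreal B"
  unfolding l2_opnorm_def
proof (rule SUP_least, clarify)
  fix n m :: nat and x :: "nat \<Rightarrow> complex"
  assume x: "(\<Sum>j<n. (cmod (x j))\<^sup>2) \<le> 1"
  have x_le: "cmod (x j) \<le> 1" if "j < n" for j
  proof -
    have "(cmod (x j))\<^sup>2 \<le> (\<Sum>j<n. (cmod (x j))\<^sup>2)" using that by (intro member_le_sum) auto
    then have "(cmod (x j))\<^sup>2 \<le> 1\<^sup>2" using x by simp
    then show ?thesis by (rule power2_le_imp_le) simp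
  qed
  have "cmod (\<Sum>j<n. M k j * x j) \<le> (\<Sum>j<n. bound k j)" for k
  proof -
    have "cmod (M k j * x j) \<le> bound k j" if "j < n" for j
      using mult_mono[OF entry x_le[OF that]]
      by (simp add: norm_mult order_trans[OF norm_ge_zero entry])
    then show ?thesis by (intro order_trans[OF norm_sum] sum_mono) auto
  qed
  then have "L2_set (\<lambda>k. cmod (\<Sum>j<n. M k j * x j)) {..<m} \<le> (\<Sum>k<m. \<Sum>j<n. bound k j)"
    by (intro order_trans[OF L2_set_le_sum] sum_mono) auto
  then show "ennreal (sqrt (\<Sum>k<m. (cmod (\<Sum>j<n. M k j * x j))\<^sup>2)) \<le> ennreal B"
    using sum[of n m] unfolding L2_set_def by (intro ennreal_leI) simp
qed

lemma sum_geometric_tail_le: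
  fixes q :: real
  assumes "0 \<le> q" "q < 1"
  shows "(\<Sum>i<n. if N \<le> i then q ^ i else 0) \<le> q ^ N / (1 - q)"
proof -
  define f where "f i = (if N \<le> i then q ^ i else 0)" for i
  have "(\<lambda>i. q ^ N * q ^ i) sums (q ^ N * (1 / (1 - q)))"
    using assms by (intro sums_mult geometric_sums) auto
  moreover have "(\<lambda>i. f (i + N)) = (\<lambda>i. q ^ N * q ^ i)"
    unfolding f_def by (auto simp: power_add)
  ultimately have "(\<lambda>i. f (i + N)) sums (q ^ N / (1 - q))"
    by simp
  then have "f sums (q ^ N / (1 - q) + (\<Sum>i<N. f i))"
    by (simp add: sums_iff_shift)
  moreover have "(\<Sum>i<N. f i) = 0"
    unfolding f_def by simp
  ultimately have "f sums (q ^ N / (1 - q))"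
    by simp
  then show ?thesis
    using sum_le_suminf[of f "{..<n}"] assms unfolding f_def by (auto simp: sums_iff)
qed

lemma sum_geometric_le:
  fixes q :: real
  assumes "0 \<le> q" "q < 1"
  shows "(\<Sum>i<n. q ^ i) \<le> 1 / (1 - q)"
  using sum_geometric_tail_le[OF assms, where N = 0 and n = n] by simp

lemma sum_block_and_tails_le:
  fixes q1 q2 B K :: real
  assumes q1: "0 \<le> q1" "q1 < 1" and q2: "0 \<le> q2" "q2 < 1" and "0 \<le> B" "0 \<le> K"
  shows "(\<Sum>k<m. \<Sum>l<n. if k < N \<and> l < N then q1 ^ l * B else K * q2 ^ k * q1 ^ l) \<le>
      N * B / (1 - q1) + K * (q2 ^ N + q1 ^ N) / ((1 - q2) * (1 - q1))"
proof -
  define t2 where "t2 k = (if N \<le> k then q2 ^ k else 0)" for k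
  define t1 where "t1 l = (if N \<le> l then q1 ^ l else 0)" for l
  have "(if k < N \<and> l < N then q1 ^ l * B else K * q2 ^ k * q1 ^ l) \<le>
      (if k < N then 1 else 0) * (q1 ^ l * B) + K * (t2 k * q1 ^ l) + K * (q2 ^ k * t1 l)" for k l
    using assms by (auto simp: t1_def t2_def algebra_simps)
  then have "(\<Sum>k<m. \<Sum>l<n. if k < N \<and> l < N then q1 ^ l * B else K * q2 ^ k * q1 ^ l) \<le>
      (\<Sum>k<m. \<Sum>l<n. (if k < N then 1 else 0) * (q1 ^ l * B) + K * (t2 k * q1 ^ l) + K * (q2 ^ k * t1 l))"
    by (intro sum_mono)
  also have "\<dots> = (\<Sum>k<m. if k < N then 1 else 0) * ((\<Sum>l<n. q1 ^ l) * B) +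
      K * ((\<Sum>k<m. t2 k) * (\<Sum>l<n. q1 ^ l)) + K * ((\<Sum>k<m. q2 ^ k) * (\<Sum>l<n. t1 l))"
  proof -
    have "(\<Sum>k<m. \<Sum>l<n. (if k < N then 1 else 0) * (q1 ^ l * B)) =
        (\<Sum>k<m. if k < N then 1 else 0) * ((\<Sum>l<n. q1 ^ l) * B)"
      by (simp only: sum_distrib_left sum_distrib_right) (rule sum.swap)
    moreover have "(\<Sum>k<m. \<Sum>l<n. K * (t2 k * q1 ^ l)) = K * ((\<Sum>k<m. t2 k) * (\<Sum>l<n. q1 ^ l))"
      "(\<Sum>k<m. \<Sum>l<n. K * (q2 ^ k * t1 l)) = K * ((\<Sum>k<m. q2 ^ k) * (\<Sum>l<n. t1 l))"
      unfolding sum_product by (simp_all only: sum_distrib_left)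
    ultimately show ?thesis by (simp only: sum.distrib)
  qed
  also have "\<dots> \<le> N * ((1 / (1 - q1)) * B) + K * ((q2 ^ N / (1 - q2)) * (1 / (1 - q1))) +
      K * ((1 / (1 - q2)) * (q1 ^ N / (1 - q1)))"
  proof (intro add_mono mult_left_mono mult_mono mult_right_mono)
    show "(\<Sum>k<m. if k < N then 1 else 0 :: real) \<le> N"
      by (induction m) auto
  qed (use assms in \<open>auto simp: t1_def t2_def
      intro!: sum_nonneg mult_nonneg_nonneg sum_geometric_le sum_geometric_tail_le\<close>)
  also have "\<dots> = N * B / (1 - q1) + K * (q2 ^ N + q1 ^ N) / ((1 - q2) * (1 - q1))"
    by (simp add: add_divide_distrib distrib_left)
  finally show ?thesis .
qed

lemma l2_opnorm_approx_mat_minus_Lmat_le: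
  assumes setting: "full_branch_setting T d a b \<phi> r R" and radii: "r < \<rho>" "\<rho> < s" "s < R"
  defines "K \<equiv> d * (2 * r / (R - s))"
  defines "B \<equiv> \<lambda>N::nat. K * (sqrt 2 * N * N * (\<rho> * legendre_growth / s) ^ N) * (s / (s - 1))"
  shows "l2_opnorm (\<lambda>k l. approx_mat T \<rho> N k l - Lmat d \<phi> \<rho> k l) \<le>
      ennreal (N * B N / (1 - r / \<rho>) + K * ((\<rho> / s) ^ N + (r / \<rho>) ^ N) / ((1 - \<rho> / s) * (1 - r / \<rho>)))"
proof (rule l2_opnorm_le_sum_entries)
  have r: "1 < r" using full_branch_settingD(1)[OF setting] .
  show "norm (approx_mat T \<rho> N k l - Lmat d \<phi> \<rho> k l) \<le>
      (if k < N \<and> l < N then (r / \<rho>) ^ l * B N else K * (\<rho> / s) ^ k * (r / \<rho>) ^ l)" for k l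
    using norm_approx_mat_minus_Lmat_inside[OF setting radii, of k N l]
      norm_approx_mat_minus_Lmat_outside[OF setting radii, of k N l]
    unfolding K_def B_def by (simp add: mult_ac)
  show "(\<Sum>k<m. \<Sum>l<n. if k < N \<and> l < N then (r / \<rho>) ^ l * B N else K * (\<rho> / s) ^ k * (r / \<rho>) ^ l) \<le>
      N * B N / (1 - r / \<rho>) + K * ((\<rho> / s) ^ N + (r / \<rho>) ^ N) / ((1 - \<rho> / s) * (1 - r / \<rho>))" for n m
    using r radii legendre_growth_gt_1 unfolding K_def B_def
    by (intro sum_block_and_tails_le) (auto intro!: mult_nonneg_nonneg divide_nonneg_nonneg)
qed

lemma cube_mult_geometric_bounded:
  fixes \<theta> :: real
  assumes "0 \<le> \<theta>" "\<theta> < 1"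
  obtains C where "C > 0" "\<And>N. real N ^ 3 * \<theta> ^ N \<le> C"
proof -
  define t where "t = root 3 \<theta>"
  have t: "0 \<le> t" "t < 1" "t ^ 3 = \<theta>"
    unfolding t_def using assms by (simp_all add: real_root_lt_1_iff)
  have "(\<lambda>n. real n * t ^ n) \<longlonglongrightarrow> 0"
    using t by (intro powser_times_n_limit_0) simp
  then have "(\<lambda>n. (real n * t ^ n) ^ 3) \<longlonglongrightarrow> 0"
    using tendsto_power[of _ 0 sequentially 3] by simp
  then have "Bseq (\<lambda>n. (real n * t ^ n) ^ 3)"
    by (intro convergent_imp_Bseq convergentI)
  then obtain C where C: "C > 0" "\<forall>n. norm ((real n * t ^ n) ^ 3) \<le> C"
    by (rule BseqE)
  have "real N ^ 3 * \<theta> ^ N \<le> C" for N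
  proof -
    have "real N ^ 3 * \<theta> ^ N = (real N * t ^ N) ^ 3"
      unfolding t(3)[symmetric] by (simp add: power_mult_distrib power_mult[symmetric] mult.commute)
    also have "\<dots> \<le> C" using C(2)[rule_format, of N] t(1) by simp
    finally show ?thesis .
  qed
  with C(1) show ?thesis by (rule that)
qed

lemma cube_geometric_plus_geometric_le:
  fixes \<theta> X q1 q2 A K :: real
  assumes "0 \<le> \<theta>" "\<theta> < 1" "0 \<le> q2" "q2 \<le> X" "0 \<le> q1" "0 \<le> A" "0 \<le> K"
  obtains C where "C > 0"
    "\<And>N. A * (real N ^ 3 * (\<theta> * X) ^ N) + K * (q2 ^ N + q1 ^ N) \<le> C * (X ^ N + q1 ^ N)"
proof -
  obtain C\<theta> where C\<theta>: "C\<theta> > 0" "\<And>N. real N ^ 3 * \<theta> ^ N \<le> C\<theta>"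
    using cube_mult_geometric_bounded[OF assms(1,2)] by blast
  have "A * (real N ^ 3 * (\<theta> * X) ^ N) + K * (q2 ^ N + q1 ^ N) \<le>
      (A * C\<theta> + K + 1) * (X ^ N + q1 ^ N)" for N
  proof -
    have X: "0 \<le> X ^ N" "0 \<le> q1 ^ N" "q2 ^ N \<le> X ^ N"
      using assms by (auto intro: power_mono)
    have "A * (real N ^ 3 * (\<theta> * X) ^ N) = A * (real N ^ 3 * \<theta> ^ N) * X ^ N"
      by (simp add: power_mult_distrib)
    also have "\<dots> \<le> A * C\<theta> * X ^ N"
      using assms X C\<theta>(2)[of N] by (intro mult_right_mono mult_left_mono) auto
    finally have "A * (real N ^ 3 * (\<theta> * X) ^ N) \<le> A * C\<theta> * X ^ N" .
    moreover have "K * (q2 ^ N + q1 ^ N) \<le> K * (X ^ N + q1 ^ N)"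
      using assms X by (intro mult_left_mono) auto
    moreover have "0 \<le> A * C\<theta> * q1 ^ N"
      using assms C\<theta>(1) X by simp
    ultimately show ?thesis
      using X by (simp add: algebra_simps)
  qed
  moreover have "A * C\<theta> + K + 1 > 0"
    using assms C\<theta>(1) by (simp add: add_nonneg_pos)
  ultimately show ?thesis using that by blast
qed

lemma approx_mat_error_bound_at_radius:
  assumes setting: "full_branch_setting T d a b \<phi> r R"
    and radii: "r < \<rho>" "\<rho> < s" "s < R" and \<gamma>: "0 < \<gamma>" "legendre_growth * R / \<gamma> < s"
  shows "\<exists>C>0. \<forall>N. l2_opnorm (\<lambda>k l. approx_mat T \<rho> N k l - Lmat d \<phi> \<rho> k l) \<le>
      ennreal (C * ((\<gamma> * \<rho> / R) ^ N + (r / \<rho>) ^ N))"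
proof -
  define \<beta> where "\<beta> = legendre_growth"
  have r: "1 < r" using full_branch_settingD(1)[OF setting] .
  have pos: "0 < \<rho>" "1 < s" "0 < R" "1 < \<beta>"
    using r radii legendre_growth_gt_1 unfolding \<beta>_def by auto
  have "R < \<beta> * R" "\<beta> * R < \<gamma> * s"
    using \<gamma> pos unfolding \<beta>_def by (simp_all add: field_simps)
  then have R_less: "R < \<gamma> * s" by linarith
  define K where "K = d * (2 * r / (R - s))"
  define q1 where "q1 = r / \<rho>"
  define q2 where "q2 = \<rho> / s"
  define \<theta> where "\<theta> = \<beta> * R / (\<gamma> * s)"
  have q: "0 < q1" "q1 < 1" "0 < q2" "q2 \<le> \<gamma> * \<rho> / R" "q2 < 1" "K \<ge> 0"
    unfolding q1_def q2_def K_def using r radii pos \<gamma> R_less by (auto simp: field_simps)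
  have \<theta>: "0 \<le> \<theta>" "\<theta> < 1" "\<rho> * \<beta> / s = \<theta> * (\<gamma> * \<rho> / R)"
    unfolding \<theta>_def using \<gamma> pos by (auto simp: field_simps \<beta>_def)
  define A where "A = K * sqrt 2 * (s / (s - 1)) / (1 - q1)"
  define K' where "K' = K / ((1 - q2) * (1 - q1))"
  have "0 \<le> A" "0 \<le> K'" unfolding A_def K'_def using q pos by auto
  then obtain C where C: "C > 0" "\<And>N. A * (real N ^ 3 * (\<theta> * (\<gamma> * \<rho> / R)) ^ N) +
      K' * (q2 ^ N + q1 ^ N) \<le> C * ((\<gamma> * \<rho> / R) ^ N + q1 ^ N)"
    using cube_geometric_plus_geometric_le[OF \<theta>(1,2)] q by (metis less_imp_le)
  have "l2_opnorm (\<lambda>k l. approx_mat T \<rho> N k l - Lmat d \<phi> \<rho> k l) \<le>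
      ennreal (C * ((\<gamma> * \<rho> / R) ^ N + (r / \<rho>) ^ N))" for N
  proof -
    have "N * (K * (sqrt 2 * N * N * (\<rho> * \<beta> / s) ^ N) * (s / (s - 1))) / (1 - q1) +
        K * ((\<rho> / s) ^ N + (r / \<rho>) ^ N) / ((1 - q2) * (1 - q1)) =
        A * (real N ^ 3 * (\<theta> * (\<gamma> * \<rho> / R)) ^ N) + K' * (q2 ^ N + q1 ^ N)"
      unfolding A_def K'_def q1_def q2_def \<theta>(3)[symmetric] by (simp add: power3_eq_cube mult_ac)
    with C(2)[of N] l2_opnorm_approx_mat_minus_Lmat_le[OF setting radii, of N] show ?thesis
      unfolding K_def q1_def q2_def \<beta>_def by (auto intro: order_trans ennreal_leI)
  qed
  with C(1) show ?thesis by blast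
qed

lemma approx_mat_error_bound:
  assumes setting: "full_branch_setting T d a b \<phi> r R" and radii: "r < \<rho>" "\<rho> < R"
  defines "\<gamma> \<equiv> (1 + sqrt 2)\<^sup>2"
  shows "\<exists>C>0. \<forall>N. l2_opnorm (\<lambda>k l. approx_mat T \<rho> N k l - Lmat d \<phi> \<rho> k l) \<le>
      ennreal (C * ((\<gamma> * \<rho> / R) ^ N + (r / \<rho>) ^ N))"
proof -
  have \<gamma>: "0 < \<gamma>" "legendre_growth < \<gamma>"
    unfolding \<gamma>_def using legendre_growth_gt_1 legendre_growth_less by auto
  moreover have "R > 0" using full_branch_settingD(1)[OF setting] radii by auto
  ultimately have "legendre_growth * R / \<gamma> < R" by (simp add: field_simps)
  \<comment> \<open>\<open>legendre_growth < \<gamma>\<close> leaves room for a radius \<open>s < R\<close> at which the block error decays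
    faster than \<open>(\<gamma> \<rho> / R)\<^sup>N\<close>\<close>
  then obtain s where "\<rho> < s" "s < R" "legendre_growth * R / \<gamma> < s"
    using radii dense[of "max \<rho> (legendre_growth * R / \<gamma>)" R] by auto
  with approx_mat_error_bound_at_radius[OF setting radii(1)] \<gamma>(1) show ?thesis
    by blast
qed

lemma powr_real_div_2:
  assumes "0 < x"
  shows "x powr (real n / 2) = sqrt x ^ n"
proof -
  have "x powr (real n / 2) = (x powr (1 / 2)) powr real n"
    by (simp add: powr_powr)
  also have "\<dots> = sqrt x ^ n"
    using assms by (simp add: powr_half_sqrt powr_realpow)
  finally show ?thesis .
qed

lemma balanced_radius_rates:
  fixes r R \<gamma> \<rho> :: real
  assumes "0 < r" "0 < R" "0 < \<gamma>" "\<rho> = sqrt (r * R / \<gamma>)"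
  shows "(\<gamma> * \<rho> / R) ^ N + (r / \<rho>) ^ N = 2 * (\<gamma> * r / R) powr (real N / 2)"
proof -
  have \<rho>: "\<rho> > 0" "\<rho>\<^sup>2 = r * R / \<gamma>" using assms by auto
  have "(\<gamma> * \<rho> / R)\<^sup>2 = \<gamma> * r / R" "(r / \<rho>)\<^sup>2 = \<gamma> * r / R"
    using assms \<rho> by (simp_all add: power_divide power_mult_distrib power2_eq_square field_simps)
  then have "\<gamma> * \<rho> / R = sqrt (\<gamma> * r / R)" "r / \<rho> = sqrt (\<gamma> * r / R)"
    using assms \<rho> by (auto intro!: real_sqrt_unique[symmetric])
  then show ?thesis
    using assms by (simp add: powr_real_div_2)
qed

theorem proposition11:
  fixes T :: "real \<Rightarrow> real" and d :: nat and a b :: "nat \<Rightarrow> real"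
    and \<phi> :: "nat \<Rightarrow> complex \<Rightarrow> complex" and r R \<rho> :: real
  assumes setting: "full_branch_setting T d a b \<phi> r R"
    and rho: "r < \<rho>" "\<rho> < R"
  defines "\<gamma> \<equiv> (1 + sqrt 2)\<^sup>2"
  shows "(\<exists>C>0. \<forall>N::nat.
            l2_opnorm (\<lambda>k l. approx_mat T \<rho> N k l - Lmat d \<phi> \<rho> k l)
              \<le> ennreal (C * ((\<gamma> * \<rho> / R) ^ N + (r / \<rho>) ^ N)))
       \<and> (\<gamma> * r < R \<longrightarrow> \<rho> = sqrt (r * R / \<gamma>) \<longrightarrow>
           (\<exists>C'>0. \<forall>N::nat.
              l2_opnorm (\<lambda>k l. approx_mat T \<rho> N k l - Lmat d \<phi> \<rho> k l)
                \<le> ennreal (C' * (\<gamma> * r / R) powr (real N / 2))))"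
proof -
  obtain C where C: "C > 0" "\<And>N. l2_opnorm (\<lambda>k l. approx_mat T \<rho> N k l - Lmat d \<phi> \<rho> k l)
      \<le> ennreal (C * ((\<gamma> * \<rho> / R) ^ N + (r / \<rho>) ^ N))"
    using approx_mat_error_bound[OF setting rho] unfolding \<gamma>_def by blast
  moreover have "\<exists>C'>0. \<forall>N::nat. l2_opnorm (\<lambda>k l. approx_mat T \<rho> N k l - Lmat d \<phi> \<rho> k l)
      \<le> ennreal (C' * (\<gamma> * r / R) powr (real N / 2))" if balanced: "\<rho> = sqrt (r * R / \<gamma>)"
  proof -
    have "0 < r" "0 < R" "0 < \<gamma>"
      using full_branch_settingD(1,2)[OF setting] legendre_growth_gt_1 legendre_growth_less
      unfolding \<gamma>_def by auto
    from balanced_radius_rates[OF this balanced] C show ?thesis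
      by (intro exI[of _ "2 * C"]) (auto simp: mult_ac)
  qed
  ultimately show ?thesis by blast
qed

end
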